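(* Let $z:[0,\infty)\to X_{0+}$ be a solution of the modified Becker–Döring equations obtained by the truncation construction described in the context. Then $J_l(z(t))\to0$ as $t\to\infty$ for every $l\ge0$.
   Context: Let $(q_l)_{l\ge1}$ be positive with $q_1=1$, $0<R:=\lim_l q_l/q_{l+1}<\infty$, and $\gamma_l>0$ with $\gamma_l/l\to0$. $X=\{z:\sum_l l|z_l|<\infty\}$, $X_{0+}$ its nonnegative elements, $\rho(z)=\sum_l lz_l$, $N(z)=\sum_lz_l$, $J_l(z)=\gamma_l\big(z_1z_l-N(z)\frac{q_l}{q_{l+1}}z_{l+1}\big)$ ($l\ge1$), $J_0(z)=-\sum_{l\ge1}J_l(z)$, $A(z)=\sum_lz_l\ln(z_l/(q_lN(z)))$ ($0\ln0=0$). Fix initial data $y\in X_{0+}$ with $y_1>0$ and $\rho_0:=\rho(y)>0$. For $m\ge2$ let $z^{(m)}$ be the solution of the truncated system $\dot z_l=J_{l-1}(z)-J_l(z)$ ($2\le l\le m-1$), $\dot z_m=J_{m-1}(z)$, $\dot z_1=-J_1(z)-\sum_{l=1}^{m-1}J_l(z)$, $z_l(0)=y_l$ ($l\le m$), with $z_l\equiv0$ for $l>m$. The solution $z$ is a continuous map $[0,\infty)\to X$ such that, for some subsequence $m_j\to\infty$, $z^{(m_j)}_l\to z_l$ uniformly on compact subsets of $[0,\infty)$ for every $l$. Such $z$ exists; it satisfies $z_l(t)\ge0$, $\rho(z(t))=\rho_0$ for all $t$, $\frac{d}{dt}z_l=J_{l-1}(z)-J_l(z)$ for $l\ge2$, $z_1(t_2)-z_1(t_1)=\int_{t_1}^{t_2}J_0(z(t))dt$,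 and $A(z(t_1))-A(z(t_2))\ge \frac{c}{\rho_0^2}\int_{t_1}^{t_2}\sum_{l\ge1}|J_l(z(t))|^2dt$ for $t_1\le t_2$, with $c>0$. *)

theory Defs
  imports "HOL-Analysis.Analysis"
begin

text \<open>Sequences z = (z_l)_{l>=1} are represented as functions nat => real;
  the entry at index 0 is ignored by every definition below.\<close>

definition inX :: "(nat \<Rightarrow> real) \<Rightarrow> bool" where
  "inX z \<longleftrightarrow> summable (\<lambda>l. real (Suc l) * \<bar>z (Suc l)\<bar>)"

definition Xnorm :: "(nat \<Rightarrow> real) \<Rightarrow> real" where
  "Xnorm z = (\<Sum>l. real (Suc l) * \<bar>z (Suc l)\<bar>)"

definition rho :: "(nat \<Rightarrow> real) \<Rightarrow> real" where
  "rho z = (\<Sum>l. real (Suc l) * z (Suc l))"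

definition Ntot :: "(nat \<Rightarrow> real) \<Rightarrow> real" where
  "Ntot z = (\<Sum>l. z (Suc l))"

definition Jflux :: "(nat \<Rightarrow> real) \<Rightarrow> (nat \<Rightarrow> real) \<Rightarrow> (nat \<Rightarrow> real) \<Rightarrow> nat \<Rightarrow> real" where
  "Jflux q \<gamma> z l =
     (if l = 0 then - (\<Sum>k. \<gamma> (Suc k) * (z 1 * z (Suc k) - Ntot z * (q (Suc k) / q (Suc (Suc k))) * z (Suc (Suc k))))
      else \<gamma> l * (z 1 * z l - Ntot z * (q l / q (Suc l)) * z (Suc l)))"

definition trunc_solution ::
  "(nat \<Rightarrow> real) \<Rightarrow> (nat \<Rightarrow> real) \<Rightarrow> (nat \<Rightarrow> real) \<Rightarrow> nat \<Rightarrow> (real \<Rightarrow> nat \<Rightarrow> real) \<Rightarrow> bool" where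
  "trunc_solution q \<gamma> y m zm \<longleftrightarrow>
     (\<forall>l. 1 \<le> l \<and> l \<le> m \<longrightarrow> zm 0 l = y l) \<and>
     (\<forall>t\<ge>0. \<forall>l>m. zm t l = 0) \<and>
     (\<forall>t\<ge>0. \<forall>l. 2 \<le> l \<and> l \<le> m - 1 \<longrightarrow>
        ((\<lambda>s. zm s l) has_real_derivative
           (Jflux q \<gamma> (zm t) (l - 1) - Jflux q \<gamma> (zm t) l)) (at t within {0..})) \<and>
     (\<forall>t\<ge>0. ((\<lambda>s. zm s m) has_real_derivative Jflux q \<gamma> (zm t) (m - 1)) (at t within {0..})) \<and>
     (\<forall>t\<ge>0. ((\<lambda>s. zm s 1) has_real_derivative
           (- Jflux q \<gamma> (zm t) 1 - (\<Sum>l=1..m-1. Jflux q \<gamma> (zm t) l))) (at t within {0..}))"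

definition trunc_limit_solution ::
  "(nat \<Rightarrow> real) \<Rightarrow> (nat \<Rightarrow> real) \<Rightarrow> (nat \<Rightarrow> real) \<Rightarrow> (real \<Rightarrow> nat \<Rightarrow> real) \<Rightarrow> bool" where
  "trunc_limit_solution q \<gamma> y z \<longleftrightarrow>
     (\<forall>t\<ge>0. inX (z t)) \<and>
     (\<forall>t0\<ge>0. ((\<lambda>t. Xnorm (\<lambda>l. z t l - z t0 l)) \<longlongrightarrow> 0) (at t0 within {0..})) \<and>
     (\<exists>zs :: nat \<Rightarrow> real \<Rightarrow> nat \<Rightarrow> real. \<exists>r :: nat \<Rightarrow> nat.
        (\<forall>m\<ge>2. trunc_solution q \<gamma> y m (zs m)) \<and>
        strict_mono r \<and> (\<forall>j. 2 \<le> r j) \<and>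
        (\<forall>l\<ge>1. \<forall>T\<ge>0. uniform_limit {0..T} (\<lambda>j t. zs (r j) t l) (\<lambda>t. z t l) sequentially))"

end

theory Submission
  imports Defs
begin

text \<open>Each truncated system conserves the mass \<open>\<Sum>l. l * w l\<close>, keeps its solution positive and
  dissipates the free energy \<open>\<Sum>l. w l * ln (w l / (q l * N))\<close> at a rate of at least \<open>(J l)\<^sup>2 / \<Lambda>\<close>,
  where \<open>\<Lambda>\<close> bounds the total fluxes \<open>\<gamma> l * (w 1 * w l + N * q l / q (l+1) * w (l+1))\<close> independently of
  the truncation. The free energies are uniformly bounded and the fluxes uniformly Lipschitz in time.
  Along the approximating subsequence the fluxes converge pointwise, the total numbers \<open>N\<close> converging
  because the first moments are uniformly bounded. Hence, if \<open>\<bar>J l (z t)\<bar>\<close> stayed away from zero at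
  arbitrarily late times, the free energies would decrease without bound. Finally \<open>J 0 = - \<Sum>l. J l\<close>
  tends to zero since \<open>\<gamma> l / l \<rightarrow> 0\<close> makes the tails of this series uniformly small.\<close>

section \<open>Elementary inequalities\<close>

lemma diff_sq_div_add_le_diff_mult_ln_diff:
  fixes a b :: real
  assumes "a > 0" "b > 0"
  shows "(a - b)^2 / (a + b) \<le> (a - b) * (ln a - ln b)"
proof -
  have key: "(u - v)^2 / (u + v) \<le> (u - v) * (ln u - ln v)" if "v \<le> u" "v > 0" for u v :: real
  proof -
    have "ln (v/u) \<le> v/u - 1" using ln_le_minus_one that by simp
    hence "(u - v)/u \<le> ln u - ln v" using that by (simp add: ln_div field_simps)
    moreover have "(u - v)/(u + v) \<le> (u - v)/u" using that by (simp add: frac_le)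
    ultimately have "(u - v)/(u + v) \<le> ln u - ln v" by linarith
    from mult_left_mono[OF this, of "u - v"] that show ?thesis by (simp add: power2_eq_square)
  qed
  show ?thesis
  proof (cases "b \<le> a")
    case True with key assms show ?thesis by blast
  next
    case False
    with key[of a b] assms show ?thesis by (simp add: power2_commute algebra_simps)
  qed
qed

lemma sq_div_le_mult_diff_ln_diff:
  fixes a b g L :: real
  assumes "a > 0" "b > 0" "g > 0" "g * (a + b) \<le> L"
  shows "(g * (a - b))^2 / L \<le> g * (a - b) * (ln a - ln b)"
proof -
  have "g * (a + b) > 0" using assms by simp
  hence "(g * (a - b))^2 / L \<le> (g * (a - b))^2 / (g * (a + b))"
    using assms(4) by (intro divide_left_mono) auto
  also have "\<dots> = g * (g * (a - b)^2) / (g * (a + b))" by (simp add: power_mult_distrib power2_eq_square)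
  also have "\<dots> = g * ((a - b)^2 / (a + b))" using assms by simp
  also have "\<dots> \<le> g * ((a - b) * (ln a - ln b))"
    using diff_sq_div_add_le_diff_mult_ln_diff assms by (intro mult_left_mono) auto
  finally show ?thesis by (simp add: mult.assoc)
qed

lemma x_ln_x_ge_minus_one:
  fixes x :: real
  assumes "x \<ge> 0"
  shows "x * ln x \<ge> -1"
proof (cases "x = 0")
  case False
  hence "x > 0" using assms by simp
  have "ln (1/x) \<le> 1/x - 1" using ln_le_minus_one \<open>x > 0\<close> by simp
  hence "x * (- ln x) \<le> x * (1/x - 1)" using \<open>x > 0\<close> by (intro mult_left_mono) (auto simp: ln_div)
  also have "\<dots> = 1 - x" using \<open>x > 0\<close> by (simp add: field_simps)
  finally show ?thesis using \<open>x > 0\<close> by simp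
qed simp

lemma x_ln_x_ge_affine:
  fixes x r :: real
  assumes "x \<ge> 0"
  shows "x * ln x \<ge> - (r * x) - exp (- r)"
proof (cases "x = 0")
  case False
  hence "x > 0" using assms by simp
  define u where "u = x * exp r"
  have "u > 0" using \<open>x > 0\<close> by (simp add: u_def)
  have "x * ln x + r * x = exp (- r) * (u * ln u)"
    using \<open>x > 0\<close> by (simp add: u_def ln_mult exp_minus field_simps)
  also have "\<dots> \<ge> exp (- r) * (-1)"
    using x_ln_x_ge_minus_one \<open>u > 0\<close> by (intro mult_left_mono) auto
  finally show ?thesis by simp
qed simp

lemma x_ln_x_le:
  fixes x r :: real
  assumes "x \<ge> 0" "x \<le> r"
  shows "x * ln x \<le> x * r"
proof (cases "x = 0")
  case False
  hence "ln x \<le> r" using assms ln_less_self[of x] by linarith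
  thus ?thesis using assms by (simp add: mult_left_mono)
qed simp

lemma sum_exp_minus_le_one: "(\<Sum>l=1..m. exp (- real l)) \<le> (1::real)"
proof -
  have "exp (- real l) \<le> (1/2::real)^l" for l
  proof -
    have "2 \<le> exp (1::real)" using exp_ge_add_one_self[of 1] by simp
    hence "exp (-1::real) \<le> 1/2" by (simp add: exp_minus field_simps)
    hence "exp (-1::real) ^ l \<le> (1/2)^l" by (rule power_mono) simp
    thus ?thesis by (simp flip: exp_of_nat_mult)
  qed
  hence "(\<Sum>l=1..m. exp (- real l)) \<le> (\<Sum>l=1..m. (1/2::real)^l)" by (intro sum_mono) auto
  also have "(\<Sum>l=1..m. (1/2::real)^l) = 1 - (1/2)^m"
    by (induction m) (auto simp: sum.atLeast1_atMost_eq)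
  finally show ?thesis using zero_le_power[of "1/2::real" m] by linarith
qed

lemma sum_summation_by_parts:
  fixes u j :: "nat \<Rightarrow> real"
  assumes "m \<ge> 1"
  shows "(\<Sum>l=2..m. u l * (j (l-1) - j l))
    = (\<Sum>k=1..m-1. j k * (u (Suc k) - u k)) + u 1 * j 1 - u m * j m"
  using assms
proof (induction m rule: dec_induct)
  case (step n)
  have "(\<Sum>l=2..Suc n. u l * (j (l-1) - j l))
      = (\<Sum>l=2..n. u l * (j (l-1) - j l)) + u (Suc n) * (j n - j (Suc n))"
    using step by (simp add: sum.atLeast_Suc_atMost_Suc_shift)
  moreover have "(\<Sum>k=1..Suc n-1. j k * (u (Suc k) - u k))
      = (\<Sum>k=1..n-1. j k * (u (Suc k) - u k)) + j n * (u (Suc n) - u n)"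
    using step by (cases n) auto
  ultimately show ?case using step by (simp add: algebra_simps)
qed simp

lemma abs_mult_diff_le:
  fixes a b a' b' :: real
  shows "\<bar>a * b - a' * b'\<bar> \<le> \<bar>a\<bar> * \<bar>b - b'\<bar> + \<bar>b'\<bar> * \<bar>a - a'\<bar>"
proof -
  have "a * b - a' * b' = a * (b - b') + b' * (a - a')" by (simp add: algebra_simps)
  thus ?thesis by (metis abs_mult abs_triangle_ineq)
qed

lemma min_zero_mult_product_le:
  fixes x y z \<kappa> B :: real
  assumes "\<kappa> \<ge> 0" "\<bar>y\<bar> \<le> B" "\<bar>z\<bar> \<le> B"
  shows "min x 0 * (\<kappa> * (y * z)) \<le> \<kappa> * B * ((min x 0)^2 + (min y 0)^2 + (min z 0)^2)"
proof -
  have B: "B \<ge> 0" using assms(2) by linarith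
  have key: "u * (\<kappa> * (v * z')) \<le> \<kappa> * B * (u^2 + v^2)"
    if "u < 0" "v < 0" "\<bar>z'\<bar> \<le> B" for u v z' :: real
  proof -
    have "u * (\<kappa> * (v * z')) = \<kappa> * ((u * v) * z')" by (simp add: algebra_simps)
    also have "\<dots> \<le> \<kappa> * ((u * v) * B)"
      using that assms(1) mult_neg_neg[of u v] by (intro mult_left_mono) auto
    also have "\<dots> = \<kappa> * B * (u * v)" by (simp add: algebra_simps)
    also have "\<dots> \<le> \<kappa> * B * (u^2 + v^2)"
    proof (rule mult_left_mono)
      have "0 < u * v" using that by (simp add: mult_neg_neg)
      thus "u * v \<le> u^2 + v^2" using sum_squares_bound[of u v] by (simp add: mult.assoc)
    qed (use assms(1) B in simp)
    finally show ?thesis .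
  qed
  have sq: "0 \<le> \<kappa> * B * (min u 0)^2" for u using assms(1) B by simp
  show ?thesis
  proof (cases "x < 0 \<and> y * z < 0")
    case True
    hence "y < 0 \<or> z < 0" by (auto simp: mult_less_0_iff)
    thus ?thesis
    proof
      assume "y < 0"
      with key[of x y z] True assms(3) have "min x 0 * (\<kappa> * (y * z)) \<le> \<kappa> * B * ((min x 0)^2 + (min y 0)^2)"
        by simp
      thus ?thesis using sq[of z] by (simp add: distrib_left)
    next
      assume "z < 0"
      with key[of x z y] True assms(2) have "min x 0 * (\<kappa> * (y * z)) \<le> \<kappa> * B * ((min x 0)^2 + (min z 0)^2)"
        by (simp add: mult.commute)
      thus ?thesis using sq[of y] by (simp add: distrib_left)
    qed
  next
    case False
    have "min x 0 * (\<kappa> * (y * z)) \<le> 0"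
    proof (cases "x < 0")
      case True
      with False have "0 \<le> \<kappa> * (y * z)" using assms(1) by simp
      thus ?thesis by (intro mult_nonpos_nonneg) auto
    qed simp
    also have "0 \<le> \<kappa> * B * ((min x 0)^2 + (min y 0)^2 + (min z 0)^2)"
      using assms(1) B by simp
    finally show ?thesis .
  qed
qed

section \<open>Differential inequalities\<close>

lemma has_real_derivative_x_ln_x:
  assumes "(g has_real_derivative g') (at t)" "g t > 0"
  shows "((\<lambda>s. g s * ln (g s)) has_real_derivative g' * (ln (g t) + 1)) (at t)"
proof -
  have "((\<lambda>s. g s * ln (g s)) has_real_derivative g' * ln (g t) + (1 / g t * g') * g t) (at t)"
    by (rule DERIV_mult[OF assms(1) DERIV_chain2[OF DERIV_ln_divide[OF assms(2)] assms(1)]])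
  thus ?thesis using assms(2) by (simp add: algebra_simps)
qed

lemma has_real_derivative_min_zero_power2:
  "((\<lambda>x::real. (min x 0)^2) has_real_derivative 2 * min x 0) (at x)"
proof -
  consider "x < 0" | "x > 0" | "x = 0" by linarith
  then show ?thesis
  proof cases
    case 1
    have "((\<lambda>x::real. x^2) has_real_derivative 2 * x) (at x)"
      by (auto intro!: derivative_eq_intros)
    from has_field_derivative_transform_within_open[OF this, of "{..<0}"] 1
    show ?thesis by auto
  next
    case 2
    from has_field_derivative_transform_within_open[OF DERIV_const[of 0 "at x"], of "{0<..}"] 2
    show ?thesis by auto
  next
    case 3
    have "((\<lambda>h. (min h 0)^2 / h) \<longlongrightarrow> 0) (at (0::real))"
    proof (rule Lim_null_comparison)
      show "\<forall>\<^sub>F h in at 0. norm ((min h 0)^2 / h) \<le> norm (h::real)"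
        by (intro always_eventually allI) (auto simp: power2_eq_square abs_mult min_def)
      show "((\<lambda>h. norm h) \<longlongrightarrow> 0) (at (0::real))"
        using tendsto_norm_zero[OF tendsto_ident_at[of "0::real" UNIV]] by simp
    qed
    then show ?thesis using 3 by (simp add: DERIV_def)
  qed
qed

lemma nonneg_of_negative_part_gronwall:
  fixes v :: "real \<Rightarrow> 'i \<Rightarrow> real" and v' :: "'i \<Rightarrow> real \<Rightarrow> real"
  assumes fin: "finite I"
    and deriv: "\<And>k s. k \<in> I \<Longrightarrow> s \<in> {0..T} \<Longrightarrow>
        ((\<lambda>s. v s k) has_real_derivative v' k s) (at s within {0..T})"
    and init: "\<And>k. k \<in> I \<Longrightarrow> v 0 k \<ge> 0"
    and bound: "\<And>k s. k \<in> I \<Longrightarrow> s \<in> {0..T} \<Longrightarrow>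
        min (v s k) 0 * v' k s \<le> C * (\<Sum>i\<in>I. (min (v s i) 0)^2)"
    and l: "l \<in> I" and t: "t \<in> {0..T}"
  shows "v t l \<ge> 0"
proof -
  define V where "V s = (\<Sum>k\<in>I. (min (v s k) 0)^2)" for s
  define V' where "V' s = (\<Sum>k\<in>I. 2 * min (v s k) 0 * v' k s)" for s
  define K where "K = 2 * real (card I) * C"
  define G where "G s = V s * exp (- (K * s))" for s
  define G' where "G' s = V' s * exp (- (K * s)) + V s * (exp (- (K * s)) * (- K))" for s
  have dV: "(V has_real_derivative V' s) (at s within {0..T})" if "s \<in> {0..T}" for s
    unfolding V_def V'_def
    by (rule DERIV_sum, rule DERIV_chain2[OF has_real_derivative_min_zero_power2 deriv])
      (use that in auto)
  have dG: "(G has_real_derivative G' s) (at s within {0..T})" if "s \<in> {0..T}" for s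
    unfolding G_def G'_def by (rule derivative_eq_intros dV[OF that] | simp)+
  have G'_nonpos: "G' s \<le> 0" if "s \<in> {0..T}" for s
  proof -
    have "V' s \<le> (\<Sum>k\<in>I. 2 * (C * V s))"
      unfolding V'_def V_def by (intro sum_mono) (use bound that in \<open>auto simp: mult.assoc\<close>)
    hence "V' s \<le> K * V s" by (simp add: K_def)
    moreover have "G' s = exp (- (K * s)) * (V' s - K * V s)" by (simp add: G'_def algebra_simps)
    ultimately show ?thesis by (simp add: mult_nonneg_nonpos)
  qed
  have "V 0 = 0" unfolding V_def using init by (auto intro!: sum.neutral simp: min_absorb2)
  hence "G 0 = 0" by (simp add: G_def)
  moreover obtain x where "x \<in> {0..t}" "G t - G 0 = G' x * (t - 0)"
  proof -
    have "(G has_derivative (*) (G' x)) (at x within {0..t})" if "0 \<le> x" "x \<le> t" for x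
      using DERIV_subset[OF dG, of x "{0..t}"] that t by (auto simp: has_field_derivative_def)
    with mvt_very_simple[of 0 t G "\<lambda>x. (*) (G' x)"] t that show ?thesis
      by (auto simp: mult.commute)
  qed
  ultimately have "G t \<le> 0" using G'_nonpos[of x] t by (auto intro: mult_nonpos_nonneg)
  hence "V t \<le> 0" unfolding G_def by (simp add: mult_le_0_iff)
  moreover have "V t \<ge> 0" unfolding V_def by (auto intro: sum_nonneg)
  ultimately have "V t = 0" by simp
  hence "\<forall>k\<in>I. (min (v t k) 0)^2 = 0" unfolding V_def using fin by (simp add: sum_nonneg_eq_0_iff)
  hence "(min (v t l) 0)^2 = 0" using l by blast
  thus ?thesis by (simp add: min_def split: if_splits)
qed

lemma pos_of_deriv_ge_linear:
  fixes g f :: "real \<Rightarrow> real"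
  assumes T: "T > 0"
    and deriv: "\<And>t. t \<in> {0..T} \<Longrightarrow> (g has_real_derivative f t) (at t within {0..T})"
    and lower: "\<And>t. t \<in> {0..T} \<Longrightarrow> f t \<ge> - C * g t"
    and "g 0 \<ge> 0"
    and strict: "g 0 > 0 \<or> (\<forall>t\<in>{0<..<T}. f t > - C * g t)"
  shows "g T > 0"
proof -
  define h where "h t = g t * exp (C * t)" for t
  define h' where "h' t = f t * exp (C * t) + g t * (exp (C * t) * C)" for t
  have dh: "(h has_real_derivative h' t) (at t within {0..T})" if "t \<in> {0..T}" for t
    unfolding h_def h'_def by (rule derivative_eq_intros deriv[OF that] | simp)+
  have h'_eq: "h' t = exp (C * t) * (f t + C * g t)" for t by (simp add: h'_def algebra_simps)
  obtain x where x: "x \<in> {0<..<T}" "h T - h 0 = T * h' x"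
  proof -
    have "(h has_derivative (*) (h' x)) (at x within {0..T})" if "0 \<le> x" "x \<le> T" for x
      using dh[of x] that by (auto simp: has_field_derivative_def)
    with mvt_simple[of 0 T h "\<lambda>x. (*) (h' x)"] T that show ?thesis by (auto simp: mult.commute)
  qed
  have "h' x \<ge> 0" unfolding h'_eq using lower[of x] x by (intro mult_nonneg_nonneg) auto
  have "h T > 0"
    using strict
  proof
    assume "g 0 > 0"
    hence "h 0 > 0" by (simp add: h_def)
    moreover have "T * h' x \<ge> 0" using T \<open>h' x \<ge> 0\<close> by simp
    ultimately show ?thesis using x(2) by linarith
  next
    assume "\<forall>t\<in>{0<..<T}. f t > - C * g t"
    hence "h' x > 0" unfolding h'_eq using x by force
    hence "T * h' x > 0" using T by simp
    moreover have "h 0 \<ge> 0" using \<open>g 0 \<ge> 0\<close> by (simp add: h_def)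
    ultimately show ?thesis using x(2) by linarith
  qed
  thus ?thesis by (simp add: h_def zero_less_mult_iff)
qed

lemma bounded_family_on_compact:
  fixes v :: "real \<Rightarrow> 'i \<Rightarrow> real"
  assumes "finite I" "compact S" "\<And>k. k \<in> I \<Longrightarrow> continuous_on S (\<lambda>t. v t k)"
  obtains B where "B \<ge> 0" "\<And>k t. k \<in> I \<Longrightarrow> t \<in> S \<Longrightarrow> \<bar>v t k\<bar> \<le> B"
proof -
  have "continuous_on S (\<lambda>t. \<Sum>k\<in>I. \<bar>v t k\<bar>)" using assms(3) by (intro continuous_intros) auto
  hence "bounded ((\<lambda>t. \<Sum>k\<in>I. \<bar>v t k\<bar>) ` S)"
    using assms(2) by (intro compact_imp_bounded compact_continuous_image)
  then obtain B where B: "B > 0" "\<And>t. t \<in> S \<Longrightarrow> \<bar>\<Sum>k\<in>I. \<bar>v t k\<bar>\<bar> \<le> B"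
    by (auto simp: bounded_pos)
  show ?thesis
  proof (rule that)
    fix k t assume "k \<in> I" "t \<in> S"
    have "\<bar>v t k\<bar> \<le> (\<Sum>k\<in>I. \<bar>v t k\<bar>)" using assms(1) \<open>k \<in> I\<close> by (intro member_le_sum) auto
    also have "\<dots> \<le> B" using B(2)[OF \<open>t \<in> S\<close>] by simp
    finally show "\<bar>v t k\<bar> \<le> B" .
  qed (use B in simp)
qed

section \<open>Series with bounded first moment\<close>

lemma
  fixes x :: "nat \<Rightarrow> real"
  assumes nonneg: "\<And>k. x k \<ge> 0" and moment: "\<And>n. (\<Sum>k<n. real (Suc k) * x k) \<le> \<rho>"
  shows summable_of_first_moment_bound: "summable x"
    and suminf_le_of_first_moment_bound: "suminf x \<le> (\<Sum>k<L. x k) + \<rho> / (real L + 1)"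
proof -
  have "x k \<le> real (Suc k) * x k" for k using mult_right_mono[of 1 "real (Suc k)" "x k"] nonneg by simp
  hence "(\<Sum>k<n. x k) \<le> (\<Sum>k<n. real (Suc k) * x k)" for n by (rule sum_mono)
  hence "(\<Sum>k<n. x k) \<le> \<rho>" for n using moment[of n] by (rule order.trans)
  thus "summable x" using nonneg summableI_nonneg_bounded by blast
  show "suminf x \<le> (\<Sum>k<L. x k) + \<rho> / (real L + 1)"
  proof (rule suminf_le_const[OF \<open>summable x\<close>])
    fix n
    have "(real L + 1) * (\<Sum>k\<in>{L..<n}. x k) \<le> (\<Sum>k\<in>{L..<n}. real (Suc k) * x k)"
      unfolding sum_distrib_left by (rule sum_mono) (use nonneg in \<open>auto intro!: mult_right_mono\<close>)
    also have "\<dots> \<le> (\<Sum>k<n. real (Suc k) * x k)" by (rule sum_mono2) (use nonneg in auto)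
    also have "\<dots> \<le> \<rho>" by (fact moment)
    finally have tail: "(\<Sum>k\<in>{L..<n}. x k) \<le> \<rho> / (real L + 1)" by (simp add: field_simps)
    show "(\<Sum>k<n. x k) \<le> (\<Sum>k<L. x k) + \<rho> / (real L + 1)"
    proof (cases "n \<le> L")
      case True
      have "(\<Sum>k<n. x k) \<le> (\<Sum>k<L. x k)" by (rule sum_mono2) (use True nonneg in auto)
      moreover have "0 \<le> (\<Sum>k\<in>{L..<n}. x k)" using nonneg by (simp add: sum_nonneg)
      ultimately show ?thesis using tail by linarith
    next
      case False
      hence "(\<Sum>k<n. x k) = (\<Sum>k<L. x k) + (\<Sum>k\<in>{L..<n}. x k)"
        by (simp add: sum.atLeastLessThan_concat lessThan_atLeast0)
      thus ?thesis using tail by simp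
    qed
  qed
qed

lemma first_moment_bound_of_tendsto:
  fixes a :: "nat \<Rightarrow> nat \<Rightarrow> real"
  assumes "\<And>k. (\<lambda>j. a j k) \<longlonglongrightarrow> b k" and "\<And>j n. (\<Sum>k<n. real (Suc k) * a j k) \<le> \<rho>"
  shows "(\<Sum>k<n. real (Suc k) * b k) \<le> \<rho>"
proof -
  have "(\<lambda>j. \<Sum>k<n. real (Suc k) * a j k) \<longlonglongrightarrow> (\<Sum>k<n. real (Suc k) * b k)"
    by (intro tendsto_intros assms(1))
  thus ?thesis using assms(2) by (intro LIMSEQ_le_const2) auto
qed

lemma suminf_tendsto_of_first_moment_bound:
  fixes a :: "nat \<Rightarrow> nat \<Rightarrow> real"
  assumes conv: "\<And>k. (\<lambda>j. a j k) \<longlonglongrightarrow> b k" and nonneg: "\<And>j k. a j k \<ge> 0"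
    and moment: "\<And>j n. (\<Sum>k<n. real (Suc k) * a j k) \<le> \<rho>"
  shows "(\<lambda>j. suminf (a j)) \<longlonglongrightarrow> suminf b"
proof (rule LIMSEQ_I)
  fix e :: real assume "e > 0"
  have b_nonneg: "b k \<ge> 0" for k by (rule LIMSEQ_le_const[OF conv]) (use nonneg in auto)
  note b_moment = first_moment_bound_of_tendsto[OF conv moment]
  have "\<rho> \<ge> 0" using b_moment[of 0] by simp
  obtain L :: nat where "real L > 3 * \<rho> / e" using reals_Archimedean2 by blast
  hence tail: "\<rho> / (real L + 1) < e / 3" using \<open>e > 0\<close> \<open>\<rho> \<ge> 0\<close> by (simp add: field_simps)
  have "(\<lambda>j. \<Sum>k<L. a j k) \<longlonglongrightarrow> (\<Sum>k<L. b k)" by (intro tendsto_sum conv)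
  then obtain N where N: "\<And>j. j \<ge> N \<Longrightarrow> \<bar>(\<Sum>k<L. a j k) - (\<Sum>k<L. b k)\<bar> < e / 3"
    using LIMSEQ_D[of _ _ "e / 3"] \<open>e > 0\<close> by force
  have "\<bar>suminf (a j) - suminf b\<bar> < e" if "j \<ge> N" for j
  proof -
    have "(\<Sum>k<L. a j k) \<le> suminf (a j)" "(\<Sum>k<L. b k) \<le> suminf b"
      using nonneg b_nonneg
        summable_of_first_moment_bound[of "a j", OF _ moment] summable_of_first_moment_bound[OF _ b_moment]
      by (auto intro!: sum_le_suminf)
    moreover have "suminf (a j) \<le> (\<Sum>k<L. a j k) + \<rho> / (real L + 1)"
      by (rule suminf_le_of_first_moment_bound[OF nonneg moment])
    moreover have "suminf b \<le> (\<Sum>k<L. b k) + \<rho> / (real L + 1)"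
      by (rule suminf_le_of_first_moment_bound[OF b_nonneg b_moment])
    ultimately show ?thesis using N[OF that, unfolded abs_less_iff] tail unfolding abs_less_iff by linarith
  qed
  thus "\<exists>N. \<forall>j\<ge>N. norm (suminf (a j) - suminf b) < e" by auto
qed

lemma
  fixes f A :: "nat \<Rightarrow> real"
  assumes dom: "\<And>k. \<bar>f k\<bar> \<le> \<eta> * A k" and nonneg: "\<And>k. A k \<ge> 0"
    and bound: "\<And>n. (\<Sum>k<n. A k) \<le> M" and "\<eta> \<ge> 0"
  shows summable_of_dominated: "summable f"
    and abs_suminf_le_of_dominated: "\<bar>suminf f\<bar> \<le> \<eta> * M"
proof -
  have partial: "(\<Sum>k<n. \<bar>f k\<bar>) \<le> \<eta> * M" for n
  proof -
    have "(\<Sum>k<n. \<bar>f k\<bar>) \<le> \<eta> * (\<Sum>k<n. A k)" unfolding sum_distrib_left by (rule sum_mono) (rule dom)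
    also have "\<dots> \<le> \<eta> * M" using bound \<open>\<eta> \<ge> 0\<close> by (rule mult_left_mono)
    finally show ?thesis .
  qed
  hence abs_summable: "summable (\<lambda>k. \<bar>f k\<bar>)" by (intro summableI_nonneg_bounded) auto
  thus "summable f" by (rule summable_rabs_cancel)
  have "\<bar>suminf f\<bar> \<le> (\<Sum>k. \<bar>f k\<bar>)" by (rule summable_rabs[OF abs_summable])
  also have "\<dots> \<le> \<eta> * M" by (rule suminf_le_const[OF abs_summable partial])
  finally show "\<bar>suminf f\<bar> \<le> \<eta> * M" .
qed

lemma suminf_tendsto_zero_of_dominated:
  fixes F A :: "real \<Rightarrow> nat \<Rightarrow> real" and e :: "nat \<Rightarrow> real"
  assumes lim: "\<And>k. ((\<lambda>t. F t k) \<longlongrightarrow> 0) at_top"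
    and dom: "\<And>t k. t \<ge> 0 \<Longrightarrow> \<bar>F t k\<bar> \<le> e k * A t k"
    and e: "e \<longlonglongrightarrow> 0"
    and A_nonneg: "\<And>t k. t \<ge> 0 \<Longrightarrow> A t k \<ge> 0"
    and A_bound: "\<And>t n. t \<ge> 0 \<Longrightarrow> (\<Sum>k<n. A t k) \<le> M"
  shows "((\<lambda>t. suminf (F t)) \<longlongrightarrow> 0) at_top"
proof (rule tendsto_iff[THEN iffD2], intro allI impI)
  fix \<epsilon> :: real assume "\<epsilon> > 0"
  have "M \<ge> 0" using A_bound[of 0 0] by simp
  define \<eta> where "\<eta> = \<epsilon> / (2 * (M + 1))"
  have "\<eta> > 0" "\<eta> * M < \<epsilon> / 2" using \<open>\<epsilon> > 0\<close> \<open>M \<ge> 0\<close> by (simp_all add: \<eta>_def field_simps)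
  obtain K where K: "\<And>k. k \<ge> K \<Longrightarrow> \<bar>e k\<bar> < \<eta>"
    using LIMSEQ_D[OF e \<open>\<eta> > 0\<close>] by auto
  have summable_tail: "summable (\<lambda>k. F t (k + K))" and tail: "\<bar>\<Sum>k. F t (k + K)\<bar> \<le> \<eta> * M" if "t \<ge> 0" for t
  proof -
    have dom': "\<bar>F t (k + K)\<bar> \<le> \<eta> * A t (k + K)" for k
    proof -
      have "e (k + K) \<le> \<eta>" using K[of "k + K"] by simp
      with dom[OF that] A_nonneg[OF that] show ?thesis by (meson mult_right_mono order.trans)
    qed
    have bound': "(\<Sum>k<n. A t (k + K)) \<le> M" for n
    proof -
      have "(\<Sum>k<n. A t (k + K)) = (\<Sum>k\<in>{0 + K..<n + K}. A t k)"
        by (simp only: sum.shift_bounds_nat_ivl lessThan_atLeast0)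
      also have "\<dots> \<le> (\<Sum>k<n + K. A t k)" by (rule sum_mono2) (use A_nonneg[OF that] in auto)
      finally show ?thesis using A_bound[OF that] by (rule order.trans)
    qed
    have "A t (k + K) \<ge> 0" for k using A_nonneg[OF that] by simp
    from dom' this bound' less_imp_le[OF \<open>\<eta> > 0\<close>]
    show "summable (\<lambda>k. F t (k + K))" "\<bar>\<Sum>k. F t (k + K)\<bar> \<le> \<eta> * M"
      by (rule summable_of_dominated, rule abs_suminf_le_of_dominated)
  qed
  have "((\<lambda>t. \<Sum>k<K. F t k) \<longlongrightarrow> 0) at_top" using tendsto_sum[OF lim] by simp
  hence "eventually (\<lambda>t. dist (\<Sum>k<K. F t k) 0 < \<epsilon> / 2) at_top"
    by (rule tendstoD) (use \<open>\<epsilon> > 0\<close> in simp)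
  thus "eventually (\<lambda>t. dist (suminf (F t)) 0 < \<epsilon>) at_top"
    using eventually_ge_at_top[of 0]
  proof eventually_elim
    case (elim t)
    have "suminf (F t) = (\<Sum>k. F t (k + K)) + (\<Sum>k<K. F t k)"
      using summable_tail[OF elim(2)] by (intro suminf_split_initial_segment) (simp add: summable_iff_shift)
    thus ?case using tail[OF elim(2)] elim(1) \<open>\<eta> * M < \<epsilon> / 2\<close> unfolding dist_real_def by linarith
  qed
qed

section \<open>Vanishing under uniform dissipation\<close>

lemma eventually_square_ge_on_interval:
  fixes G :: "nat \<Rightarrow> real \<Rightarrow> real"
  assumes conv: "(\<lambda>j. G j t) \<longlonglongrightarrow> g"
    and lipschitz: "\<And>j s. s \<in> {t..t + h} \<Longrightarrow> \<bar>G j s - G j t\<bar> \<le> L * \<bar>s - t\<bar>"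
    and "L \<ge> 0" "L * h \<le> \<epsilon> / 2" "\<epsilon> \<le> \<bar>g\<bar>" "\<epsilon> > 0"
  shows "eventually (\<lambda>j. \<forall>s\<in>{t..t + h}. (\<epsilon> / 4)^2 \<le> (G j s)^2) sequentially"
proof -
  from LIMSEQ_D[OF conv, of "\<epsilon> / 4"] \<open>\<epsilon> > 0\<close>
  have "eventually (\<lambda>j. \<bar>G j t - g\<bar> < \<epsilon> / 4) sequentially" by (auto simp: eventually_sequentially)
  thus ?thesis
  proof eventually_elim
    case (elim j)
    show ?case
    proof
      fix s assume s: "s \<in> {t..t + h}"
      have "\<bar>s - t\<bar> \<le> h" using s by auto
      hence "\<bar>G j s - G j t\<bar> \<le> L * h"
        using lipschitz[OF s] mult_left_mono[OF _ \<open>L \<ge> 0\<close>] by (meson order.trans)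
      hence "\<epsilon> / 4 \<le> \<bar>G j s\<bar>" using elim \<open>L * h \<le> \<epsilon> / 2\<close> \<open>\<epsilon> \<le> \<bar>g\<bar>\<close> by linarith
      thus "(\<epsilon> / 4)^2 \<le> (G j s)^2"
        using \<open>\<epsilon> > 0\<close> by (metis abs_le_square_iff abs_of_pos zero_less_divide_iff zero_less_numeral)
    qed
  qed
qed

text \<open>If \<open>\<bar>g\<bar>\<close> stayed large at arbitrarily late times, then on a window of fixed length after each
  of them \<open>E j\<close> would drop by a fixed amount for all large \<open>j\<close>, contradicting the uniform bound.\<close>
lemma tendsto_zero_of_uniform_dissipation:
  fixes G E :: "nat \<Rightarrow> real \<Rightarrow> real" and g :: "real \<Rightarrow> real"
  assumes conv: "\<And>t. t \<ge> 0 \<Longrightarrow> (\<lambda>j. G j t) \<longlonglongrightarrow> g t"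
    and lipschitz: "\<And>j s t. s \<ge> 0 \<Longrightarrow> t \<ge> 0 \<Longrightarrow> \<bar>G j s - G j t\<bar> \<le> L * \<bar>s - t\<bar>"
    and bounded: "\<And>j t. t \<ge> 0 \<Longrightarrow> \<bar>E j t\<bar> \<le> K"
    and "\<kappa> > 0"
    and dissipation: "\<And>j a b \<delta>. j \<ge> j0 \<Longrightarrow> 0 < a \<Longrightarrow> a \<le> b \<Longrightarrow>
        (\<forall>s\<in>{a..b}. \<delta> \<le> (G j s)^2) \<Longrightarrow> E j b + \<kappa> * \<delta> * (b - a) \<le> E j a"
  shows "(g \<longlongrightarrow> 0) at_top"
proof (rule ccontr)
  assume "\<not> (g \<longlongrightarrow> 0) at_top"
  then obtain \<epsilon> where "\<epsilon> > 0" and large: "\<And>T. \<exists>t\<ge>T. \<epsilon> \<le> \<bar>g t\<bar>"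
    unfolding tendsto_iff eventually_at_top_linorder dist_real_def by (force simp: not_less)
  have "L \<ge> 0" using lipschitz[of 1 0 0] by simp
  define h where "h = \<epsilon> / (2 * (L + 1))"
  define c0 where "c0 = \<kappa> * (\<epsilon> / 4)^2 * h"
  have "h > 0" "c0 > 0" using \<open>\<epsilon> > 0\<close> \<open>L \<ge> 0\<close> \<open>\<kappa> > 0\<close> by (simp_all add: h_def c0_def)
  have "L * h \<le> \<epsilon> / 2"
    using \<open>\<epsilon> > 0\<close> \<open>L \<ge> 0\<close> by (simp add: h_def field_simps)
  have drop: "\<exists>a b j1. 0 < a \<and> a \<le> b \<and> (\<forall>j\<ge>j1. E j b + real n * c0 \<le> E j a)" for n
  proof (induction n)
    case 0 show ?case by (intro exI[of _ 1]) simp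
  next
    case (Suc n)
    then obtain a b j1 where ab: "0 < a" "a \<le> b" "\<And>j. j \<ge> j1 \<Longrightarrow> E j b + real n * c0 \<le> E j a"
      by blast
    obtain t where t: "t \<ge> b" "\<epsilon> \<le> \<bar>g t\<bar>" using large by blast
    have "eventually (\<lambda>j. \<forall>s\<in>{t..t + h}. (\<epsilon> / 4)^2 \<le> (G j s)^2) sequentially"
      using t ab \<open>L \<ge> 0\<close> \<open>L * h \<le> \<epsilon> / 2\<close> \<open>\<epsilon> > 0\<close>
      by (intro eventually_square_ge_on_interval[OF conv lipschitz]) auto
    then obtain j2 where j2: "\<And>j. j \<ge> j2 \<Longrightarrow> \<forall>s\<in>{t..t + h}. (\<epsilon> / 4)^2 \<le> (G j s)^2"
      by (auto simp: eventually_sequentially)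
    have "E j (t + h) + real (Suc n) * c0 \<le> E j a" if "j \<ge> max j0 (max j1 j2)" for j
    proof -
      have "E j (t + h) + c0 \<le> E j t"
        using dissipation[of j t "t + h"] j2[of j] that t ab \<open>h > 0\<close> by (simp add: c0_def)
      moreover have "E j t \<le> E j b" using dissipation[of j b t 0] that t ab by simp
      ultimately show ?thesis using ab(3)[of j] that by (simp add: algebra_simps)
    qed
    thus ?case using ab t \<open>h > 0\<close> by (intro exI[of _ a] exI[of _ "t + h"] exI[of _ "max j0 (max j1 j2)"]) auto
  qed
  obtain n :: nat where "2 * K < real n * c0" using ex_less_of_nat_mult[OF \<open>c0 > 0\<close>] by blast
  moreover obtain a b j1 where "0 < a" "a \<le> b" "E j1 b + real n * c0 \<le> E j1 a" using drop by blast
  moreover have "\<bar>E j1 a\<bar> \<le> K" "\<bar>E j1 b\<bar> \<le> K" using bounded \<open>0 < a\<close> \<open>a \<le> b\<close> by auto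
  ultimately show False by linarith
qed

section \<open>Growth bounds on the coefficients\<close>

lemma linear_bound_of_convergent_div:
  fixes \<gamma> :: "nat \<Rightarrow> real"
  assumes "convergent (\<lambda>l. \<gamma> l / real l)"
  obtains C where "C > 0" "\<And>l. l \<ge> 1 \<Longrightarrow> \<gamma> l \<le> C * real l"
proof -
  obtain C where C: "C > 0" "\<And>l. \<bar>\<gamma> l / real l\<bar> \<le> C"
    using convergent_imp_Bseq[OF assms] unfolding Bseq_def by auto
  have "\<gamma> l \<le> C * real l" if "l \<ge> 1" for l
    using C(2)[of l] that by (simp add: abs_le_iff divide_le_eq)
  with C(1) show ?thesis by (rule that)
qed

lemma pos_bounds_of_tendsto_pos:
  fixes f :: "nat \<Rightarrow> real"
  assumes lim: "f \<longlonglongrightarrow> R" and "R > 0" and pos: "\<And>l. l \<ge> 1 \<Longrightarrow> f l > 0"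
  obtains lo hi where "lo > 0" "\<And>l. l \<ge> 1 \<Longrightarrow> lo \<le> f l \<and> f l \<le> hi"
proof -
  obtain hi where hi: "\<And>l. \<bar>f l\<bar> \<le> hi"
    using convergent_imp_Bseq[OF convergentI[OF lim]] unfolding Bseq_def by auto
  have "eventually (\<lambda>l. R / 2 < f l) sequentially"
    by (rule order_tendstoD(1)[OF lim]) (use \<open>R > 0\<close> in simp)
  then obtain N where N: "\<And>l. l \<ge> N \<Longrightarrow> R / 2 < f l" by (auto simp: eventually_sequentially)
  define S where "S = insert (R / 2) (f ` {1..N})"
  have "finite S" "Min S > 0" using \<open>R > 0\<close> pos by (auto simp: S_def Min_gr_iff)
  have "Min S \<le> f l" if "l \<ge> 1" for l
  proof (cases "l \<le> N")
    case True
    hence "f l \<in> S" using that by (simp add: S_def)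
    thus ?thesis using Min_le[OF \<open>finite S\<close>] by blast
  next
    case False
    thus ?thesis using N[of l] Min_le[OF \<open>finite S\<close>, of "R / 2"] by (simp add: S_def)
  qed
  with \<open>Min S > 0\<close> hi show ?thesis by (intro that[of "Min S" hi]) (auto simp: abs_le_iff)
qed

lemma ln_linear_bound_of_ratio_bounds:
  fixes q :: "nat \<Rightarrow> real"
  assumes "q 1 = 1" and pos: "\<And>l. l \<ge> 1 \<Longrightarrow> q l > 0" and "lo > 0"
    and ratio: "\<And>l. l \<ge> 1 \<Longrightarrow> lo \<le> q l / q (Suc l) \<and> q l / q (Suc l) \<le> hi"
  obtains L where "L \<ge> 0" "\<And>l. l \<ge> 1 \<Longrightarrow> \<bar>ln (q l)\<bar> \<le> L * real l"
proof -
  define L where "L = \<bar>ln lo\<bar> + \<bar>ln hi\<bar>"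
  have "L \<ge> 0" by (simp add: L_def)
  have ln_ratio: "\<bar>ln (q l) - ln (q (Suc l))\<bar> \<le> L" if "l \<ge> 1" for l
  proof -
    have "q l > 0" "q (Suc l) > 0" using pos that by auto
    hence "ln (q l / q (Suc l)) = ln (q l) - ln (q (Suc l))" by (simp add: ln_div)
    moreover have "ln lo \<le> ln (q l / q (Suc l))" "ln (q l / q (Suc l)) \<le> ln hi"
      using ratio[OF that] \<open>q l > 0\<close> \<open>q (Suc l) > 0\<close> \<open>lo > 0\<close> by auto
    ultimately show ?thesis unfolding L_def by linarith
  qed
  have "\<bar>ln (q l)\<bar> \<le> L * real (l - 1)" if "l \<ge> 1" for l
    using that
  proof (induction l rule: dec_induct)
    case (step n)
    have "\<bar>ln (q (Suc n))\<bar> \<le> \<bar>ln (q n)\<bar> + \<bar>ln (q n) - ln (q (Suc n))\<bar>" by linarith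
    also have "\<dots> \<le> L * real (n - 1) + L" using step ln_ratio by (intro add_mono) auto
    finally show ?case using step(1) by (simp add: of_nat_diff algebra_simps)
  qed (use \<open>q 1 = 1\<close> in simp)
  moreover have "L * real (l - 1) \<le> L * real l" for l using \<open>L \<ge> 0\<close> by (simp add: mult_left_mono)
  ultimately have "\<bar>ln (q l)\<bar> \<le> L * real l" if "l \<ge> 1" for l using that by (meson order.trans)
  with \<open>L \<ge> 0\<close> show ?thesis by (rule that)
qed

section \<open>The truncated system\<close>

text \<open>All bounds derived below depend on \<open>m\<close> only through \<open>Cg\<close>, \<open>Cc\<close>, \<open>Lq\<close> and \<open>rho y\<close>, hence hold
  uniformly along a sequence of truncations.\<close>
locale truncation =
  fixes q \<gamma> y :: "nat \<Rightarrow> real" and m :: nat and w :: "real \<Rightarrow> nat \<Rightarrow> real" and Cg Cc Lq :: real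
  assumes m_ge_2: "m \<ge> 2" and solution: "trunc_solution q \<gamma> y m w"
    and q_pos: "\<And>l. l \<ge> 1 \<Longrightarrow> q l > 0" and q1: "q 1 = 1"
    and gamma_pos: "\<And>l. l \<ge> 1 \<Longrightarrow> \<gamma> l > 0"
    and y_nonneg: "\<And>l. l \<ge> 1 \<Longrightarrow> y l \<ge> 0" and y1: "y 1 > 0" and y_X: "inX y"
    and gamma_le: "\<And>l. l \<ge> 1 \<Longrightarrow> \<gamma> l \<le> Cg * real l"
    and ratio_le: "\<And>l. l \<ge> 1 \<Longrightarrow> q l / q (Suc l) \<le> Cc"
    and ln_q_le: "\<And>l. l \<ge> 1 \<Longrightarrow> \<bar>ln (q l)\<bar> \<le> Lq * real l"
begin

definition "ratio k = q k / q (Suc k)"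
definition "Nw t = (\<Sum>k=1..m. w t k)"
definition "flux k t = \<gamma> k * (w t 1 * w t k - Nw t * ratio k * w t (Suc k))"
definition "trunc_flux k t = (if 1 \<le> k \<and> k < m then flux k t else 0)"
definition "rhs l t =
  (if l = 1 then - trunc_flux 1 t - (\<Sum>k=1..m-1. trunc_flux k t) else trunc_flux (l-1) t - trunc_flux l t)"

text \<open>The terms of \<open>gain\<close> are products of components with nonnegative coefficients, so \<open>gain\<close> is
  nonnegative as long as all components are; this is what propagates nonnegativity and positivity.\<close>
definition "loss l t =
  (if l = 1 then - \<gamma> 1 * w t 1 - (\<Sum>k=1..m-1. \<gamma> k * w t k)
   else - \<gamma> (l-1) * Nw t * ratio (l-1) - (if l < m then \<gamma> l * w t 1 else 0))"
definition "gain l t =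
  (if l = 1 then \<gamma> 1 * ratio 1 * Nw t * w t 2 + (\<Sum>k=1..m-1. \<gamma> k * ratio k * Nw t * w t (Suc k))
   else \<gamma> (l-1) * w t 1 * w t (l-1) + (if l < m then \<gamma> l * ratio l * Nw t * w t (Suc l) else 0))"

lemma ratio_pos: "k \<ge> 1 \<Longrightarrow> ratio k > 0"
  using q_pos by (simp add: ratio_def)

lemma ratio_le_Cc: "k \<ge> 1 \<Longrightarrow> ratio k \<le> Cc"
  using ratio_le by (simp add: ratio_def)

lemma Cg_pos: "Cg > 0"
  using gamma_pos[of 1] gamma_le[of 1] by simp

lemma Cc_nonneg: "Cc \<ge> 0"
  using ratio_pos[of 1] ratio_le[of 1] by (simp add: ratio_def)

lemma Lq_nonneg: "Lq \<ge> 0"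
  using ln_q_le[of 1] by simp

lemma w_eq_0: "t \<ge> 0 \<Longrightarrow> l > m \<Longrightarrow> w t l = 0"
  using solution by (simp add: trunc_solution_def)

lemma w_init: "1 \<le> l \<Longrightarrow> l \<le> m \<Longrightarrow> w 0 l = y l"
  using solution by (simp add: trunc_solution_def)

lemma Ntot_eq: "t \<ge> 0 \<Longrightarrow> Ntot (w t) = Nw t"
proof -
  assume "t \<ge> 0"
  hence "(\<lambda>l. w t (Suc l)) sums (\<Sum>l<m. w t (Suc l))" by (intro sums_finite) (auto simp: w_eq_0)
  thus ?thesis by (simp add: Ntot_def Nw_def sums_iff sum_bounds_lt_plus1)
qed

lemma Jflux_eq: "t \<ge> 0 \<Longrightarrow> k \<ge> 1 \<Longrightarrow> Jflux q \<gamma> (w t) k = flux k t"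
  using Ntot_eq by (simp add: Jflux_def flux_def ratio_def)

lemma has_real_derivative_w:
  assumes "t \<ge> 0" and l: "l \<in> {1..m}"
  shows "((\<lambda>s. w s l) has_real_derivative rhs l t) (at t within {0..})"
proof -
  have trunc_flux: "trunc_flux k t = Jflux q \<gamma> (w t) k" if "1 \<le> k" "k < m" for k
    using that \<open>t \<ge> 0\<close> by (simp add: trunc_flux_def Jflux_eq)
  consider "l = 1" | "2 \<le> l \<and> l \<le> m - 1" | "l = m" using l m_ge_2 by force
  then show ?thesis
  proof cases
    case 1
    have "(\<Sum>k=1..m-1. trunc_flux k t) = (\<Sum>k=1..m-1. Jflux q \<gamma> (w t) k)"
      by (rule sum.cong) (auto simp: trunc_flux)
    with solution \<open>t \<ge> 0\<close> m_ge_2 trunc_flux[of 1] 1 show ?thesis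
      by (auto simp: trunc_solution_def rhs_def)
  next
    case 2
    with solution \<open>t \<ge> 0\<close> trunc_flux[of l] trunc_flux[of "l - 1"] show ?thesis
      by (auto simp: trunc_solution_def rhs_def)
  next
    case 3
    with solution \<open>t \<ge> 0\<close> m_ge_2 trunc_flux[of "m - 1"] show ?thesis
      by (auto simp: trunc_solution_def rhs_def trunc_flux_def)
  qed
qed

lemma continuous_on_w: "k \<ge> 1 \<Longrightarrow> continuous_on {0..} (\<lambda>s. w s k)"
proof (cases "k \<le> m")
  case True
  assume "k \<ge> 1"
  have "continuous (at s within {0..}) (\<lambda>s. w s k)" if "s \<in> {0..}" for s
    using DERIV_continuous[OF has_real_derivative_w[of s k]] that True \<open>k \<ge> 1\<close> by auto
  thus ?thesis by (simp add: continuous_on_eq_continuous_within)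
next
  case False
  thus ?thesis by (subst continuous_on_cong[OF refl, of _ _ "\<lambda>_. 0"]) (auto simp: w_eq_0)
qed

lemma rhs_eq_loss_gain:
  assumes "l \<in> {1..m}"
  shows "rhs l t = w t l * loss l t + gain l t"
proof (cases "l = 1")
  case True
  have "(\<Sum>k=1..m-1. trunc_flux k t) = (\<Sum>k=1..m-1. w t 1 * (\<gamma> k * w t k) - \<gamma> k * ratio k * Nw t * w t (Suc k))"
    by (rule sum.cong) (auto simp: trunc_flux_def flux_def algebra_simps)
  moreover have "trunc_flux 1 t = w t 1 * (\<gamma> 1 * w t 1) - \<gamma> 1 * ratio 1 * Nw t * w t 2"
    using m_ge_2 by (simp add: trunc_flux_def flux_def numeral_2_eq_2 algebra_simps)
  ultimately show ?thesis
    using True by (simp add: rhs_def loss_def gain_def sum_subtractf sum_distrib_left algebra_simps)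
next
  case False
  hence "trunc_flux (l-1) t = flux (l-1) t" "trunc_flux l t = (if l < m then flux l t else 0)" "Suc (l-1) = l"
    using assms by (auto simp: trunc_flux_def)
  with False show ?thesis by (simp add: rhs_def flux_def loss_def gain_def algebra_simps)
qed

definition "coeff_max = Cg * real m * (1 + Cc)"

lemma coeff_bounds:
  assumes "k \<in> {1..m}"
  shows "0 \<le> \<gamma> k" "\<gamma> k \<le> coeff_max" "0 \<le> \<gamma> k * ratio k" "\<gamma> k * ratio k \<le> coeff_max"
proof -
  have "0 < \<gamma> k" "\<gamma> k \<le> Cg * real m" "0 < ratio k" "ratio k \<le> Cc"
    using gamma_pos[of k] gamma_le[of k] ratio_pos[of k] ratio_le[of k] assms Cg_pos
    by (auto simp: ratio_def intro: order.trans[OF _ mult_left_mono])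
  moreover have "Cg * real m \<le> coeff_max" "Cg * real m * Cc \<le> coeff_max"
    using Cg_pos Cc_nonneg by (simp_all add: coeff_max_def algebra_simps)
  ultimately show "0 \<le> \<gamma> k" "\<gamma> k \<le> coeff_max" "0 \<le> \<gamma> k * ratio k" "\<gamma> k * ratio k \<le> coeff_max"
    by (auto intro: order.trans[OF mult_mono])
qed

definition "neg_energy s = (\<Sum>k=1..m. (min (w s k) 0)^2)"

lemma neg_energy_nonneg: "neg_energy s \<ge> 0"
  by (simp add: neg_energy_def sum_nonneg)

lemma min_zero_power2_le_neg_energy: "k \<in> {1..m} \<Longrightarrow> (min (w s k) 0)^2 \<le> neg_energy s"
  unfolding neg_energy_def by (intro member_le_sum) auto

context
  fixes s B :: real
  assumes B: "\<And>k. k \<in> {1..m} \<Longrightarrow> \<bar>w s k\<bar> \<le> B"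
begin

lemma min_zero_mult_product_w_le:
  assumes "l \<in> {1..m}" "i \<in> {1..m}" "j \<in> {1..m}" "0 \<le> \<kappa>" "\<kappa> \<le> coeff_max"
  shows "min (w s l) 0 * (\<kappa> * (w s i * w s j)) \<le> 3 * coeff_max * B * neg_energy s"
proof -
  have "min (w s l) 0 * (\<kappa> * (w s i * w s j))
      \<le> \<kappa> * B * ((min (w s l) 0)^2 + (min (w s i) 0)^2 + (min (w s j) 0)^2)"
    using assms B by (intro min_zero_mult_product_le) auto
  also have "\<dots> \<le> coeff_max * B * (3 * neg_energy s)"
  proof (intro mult_mono)
    show "(min (w s l) 0)^2 + (min (w s i) 0)^2 + (min (w s j) 0)^2 \<le> 3 * neg_energy s"
      using min_zero_power2_le_neg_energy[OF assms(1), of s] min_zero_power2_le_neg_energy[OF assms(2), of s]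
      min_zero_power2_le_neg_energy[OF assms(3), of s] by linarith
  qed (use assms B[of i] in auto)
  finally show ?thesis by (simp add: algebra_simps)
qed

lemma min_zero_mult_product_Nw_le:
  assumes "l \<in> {1..m}" "j \<in> {1..m}" "0 \<le> \<kappa>" "\<kappa> \<le> coeff_max"
  shows "min (w s l) 0 * (\<kappa> * (Nw s * w s j)) \<le> real m * (3 * coeff_max * B * neg_energy s)"
proof -
  have "min (w s l) 0 * (\<kappa> * (Nw s * w s j)) = (\<Sum>i=1..m. min (w s l) 0 * (\<kappa> * (w s i * w s j)))"
    by (simp add: Nw_def sum_distrib_left sum_distrib_right)
  also have "\<dots> \<le> (\<Sum>i=1..m. 3 * coeff_max * B * neg_energy s)"
    using assms by (intro sum_mono min_zero_mult_product_w_le) auto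
  finally show ?thesis by simp
qed

lemma min_zero_mult_gain_le:
  assumes l: "l \<in> {1..m}"
  shows "min (w s l) 0 * gain l s \<le> real m ^ 2 * (3 * coeff_max * B * neg_energy s)"
proof -
  define P where "P = 3 * coeff_max * B * neg_energy s"
  have "P \<ge> 0"
    using B[of 1] coeff_bounds[of 1] m_ge_2 neg_energy_nonneg[of s] by (simp add: P_def)
  show ?thesis
  proof (cases "l = 1")
    case True
    have "min (w s l) 0 * gain l s = min (w s l) 0 * ((\<gamma> 1 * ratio 1) * (Nw s * w s 2))
        + (\<Sum>k=1..m-1. min (w s l) 0 * ((\<gamma> k * ratio k) * (Nw s * w s (Suc k))))"
      using True by (simp add: gain_def distrib_left sum_distrib_left mult.assoc)
    also have "\<dots> \<le> real m * P + (\<Sum>k=1..m-1. real m * P)"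
      unfolding P_def using l coeff_bounds m_ge_2
      by (intro add_mono sum_mono min_zero_mult_product_Nw_le) auto
    also have "\<dots> = real m ^ 2 * P"
      using m_ge_2 by (simp add: of_nat_diff power2_eq_square algebra_simps)
    finally show ?thesis by (simp add: P_def)
  next
    case False
    hence "l - 1 \<in> {1..m}" using l by auto
    have first: "min (w s l) 0 * (\<gamma> (l-1) * w s 1 * w s (l-1)) \<le> P"
      using min_zero_mult_product_w_le[OF l _ \<open>l - 1 \<in> {1..m}\<close> coeff_bounds(1,2)[OF \<open>l - 1 \<in> {1..m}\<close>], of 1]
        m_ge_2
      by (simp add: P_def mult.assoc)
    have second: "min (w s l) 0 * (if l < m then \<gamma> l * ratio l * Nw s * w s (Suc l) else 0) \<le> real m * P"
    proof (cases "l < m")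
      case True
      hence "Suc l \<in> {1..m}" using l by simp
      from min_zero_mult_product_Nw_le[OF l this coeff_bounds(3,4)[OF l]] True show ?thesis
        by (simp only: P_def mult.assoc if_True)
    qed (use \<open>P \<ge> 0\<close> in simp)
    have "1 + real m \<le> real m ^ 2"
    proof -
      have "real m * 2 \<le> real m * real m" using m_ge_2 by (intro mult_left_mono) auto
      moreover have "real m \<ge> 2" using m_ge_2 by simp
      ultimately show ?thesis unfolding power2_eq_square by linarith
    qed
    have "min (w s l) 0 * gain l s = min (w s l) 0 * (\<gamma> (l-1) * w s 1 * w s (l-1))
        + min (w s l) 0 * (if l < m then \<gamma> l * ratio l * Nw s * w s (Suc l) else 0)"
      using False by (simp only: gain_def if_False distrib_left)
    also have "\<dots> \<le> (1 + real m) * P" using first second by (simp add: distrib_right)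
    also have "\<dots> \<le> real m ^ 2 * P" using \<open>1 + real m \<le> real m ^ 2\<close> \<open>P \<ge> 0\<close> by (rule mult_right_mono)
    finally show ?thesis by (simp add: P_def)
  qed
qed

end

lemma continuous_on_loss: "l \<in> {1..m} \<Longrightarrow> continuous_on {0..} (\<lambda>s. loss l s)"
  unfolding loss_def Nw_def by (cases "l = 1"; cases "l < m") (auto intro!: continuous_intros continuous_on_w)

lemma loss_bounded:
  obtains C where "C \<ge> 0" "\<And>k s. k \<in> {1..m} \<Longrightarrow> s \<in> {0..t} \<Longrightarrow> \<bar>loss k s\<bar> \<le> C"
  by (rule bounded_family_on_compact[of "{1..m}" "{0..t}" "\<lambda>s k. loss k s"])
    (auto intro: continuous_on_subset[OF continuous_on_loss])

text \<open>On a compact time interval the components are bounded, so \<open>min (w s l) 0 * gain l s\<close> is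
  controlled by the squared negative parts, and Gronwall's lemma keeps these zero.\<close>
lemma w_nonneg:
  assumes "t \<ge> 0" "l \<ge> 1"
  shows "w t l \<ge> 0"
proof (cases "l \<le> m")
  case True
  obtain B where B: "B \<ge> 0" "\<And>k s. k \<in> {1..m} \<Longrightarrow> s \<in> {0..t} \<Longrightarrow> \<bar>w s k\<bar> \<le> B"
    by (rule bounded_family_on_compact[of "{1..m}" "{0..t}" w])
      (auto intro: continuous_on_subset[OF continuous_on_w])
  obtain C where C: "C \<ge> 0" "\<And>k s. k \<in> {1..m} \<Longrightarrow> s \<in> {0..t} \<Longrightarrow> \<bar>loss k s\<bar> \<le> C"
    using loss_bounded[of t] by blast
  show ?thesis
  proof (rule nonneg_of_negative_part_gronwall[of "{1..m}" t w rhs "C + real m ^ 2 * (3 * coeff_max * B)"])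
    fix k s assume k: "k \<in> {1..m}" and s: "s \<in> {0..t}"
    show "((\<lambda>s. w s k) has_real_derivative rhs k s) (at s within {0..t})"
      using has_real_derivative_w[of s k] k s by (auto intro: DERIV_subset)
    have "min (w s k) 0 * (w s k * loss k s) = (min (w s k) 0)^2 * loss k s"
      by (simp add: min_def power2_eq_square)
    also have "\<dots> \<le> (min (w s k) 0)^2 * C" using C(2)[OF k s] by (intro mult_left_mono) auto
    also have "\<dots> \<le> neg_energy s * C"
      using C(1) min_zero_power2_le_neg_energy[OF k] by (intro mult_right_mono)
    finally have "min (w s k) 0 * (w s k * loss k s) \<le> C * neg_energy s" by (simp add: mult.commute)
    moreover have "min (w s k) 0 * gain k s \<le> real m ^ 2 * (3 * coeff_max * B * neg_energy s)"
      using B(2)[OF _ s] k by (intro min_zero_mult_gain_le)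
    ultimately show "min (w s k) 0 * rhs k s \<le> (C + real m ^ 2 * (3 * coeff_max * B)) * (\<Sum>i=1..m. (min (w s i) 0)^2)"
      by (simp add: rhs_eq_loss_gain[OF k] neg_energy_def distrib_left algebra_simps)
  qed (use assms True w_init y_nonneg in auto)
next
  case False
  thus ?thesis using assms w_eq_0 by simp
qed

definition "flux_bound = Cg * rho y * rho y * (1 + Cc)"
definition "flux_total k t = \<gamma> k * (w t 1 * w t k + Nw t * ratio k * w t (Suc k))"

lemma sum_mult_rhs:
  "(\<Sum>l=1..m. u l * rhs l t) = (\<Sum>k=1..m-1. trunc_flux k t * (u (Suc k) - u k - u 1))"
proof -
  have split: "{1..m} = insert 1 {2..m}" using m_ge_2 by auto
  have "(\<Sum>l=1..m. u l * rhs l t) = u 1 * rhs 1 t + (\<Sum>l=2..m. u l * rhs l t)"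
    unfolding split by simp
  also have "(\<Sum>l=2..m. u l * rhs l t) = (\<Sum>l=2..m. u l * (trunc_flux (l-1) t - trunc_flux l t))"
    by (rule sum.cong) (auto simp: rhs_def)
  also have "\<dots> = (\<Sum>k=1..m-1. trunc_flux k t * (u (Suc k) - u k)) + u 1 * trunc_flux 1 t - u m * trunc_flux m t"
    by (rule sum_summation_by_parts[where j="\<lambda>k. trunc_flux k t"]) (use m_ge_2 in simp)
  also have "trunc_flux m t = 0" by (simp add: trunc_flux_def)
  finally have "(\<Sum>l=1..m. u l * rhs l t) = u 1 * rhs 1 t + (\<Sum>k=1..m-1. trunc_flux k t * (u (Suc k) - u k)) + u 1 * trunc_flux 1 t"
    by simp
  also have "u 1 * rhs 1 t = - u 1 * trunc_flux 1 t - (\<Sum>k=1..m-1. trunc_flux k t * u 1)"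
    by (simp add: rhs_def algebra_simps sum_distrib_left)
  finally show ?thesis by (simp add: algebra_simps sum_subtractf sum.distrib)
qed

lemma has_real_derivative_Nw: "t \<ge> 0 \<Longrightarrow> (Nw has_real_derivative (- (\<Sum>k=1..m-1. trunc_flux k t))) (at t within {0..})"
proof -
  assume t: "t \<ge> 0"
  have "((\<lambda>s. \<Sum>l=1..m. w s l) has_real_derivative (\<Sum>l=1..m. rhs l t)) (at t within {0..})"
    by (rule DERIV_sum, rule has_real_derivative_w) (use t in auto)
  moreover have "(\<Sum>l=1..m. rhs l t) = - (\<Sum>k=1..m-1. trunc_flux k t)"
    using sum_mult_rhs[of "\<lambda>_. 1" t] by (simp add: sum_negf)
  ultimately show ?thesis unfolding Nw_def[abs_def] by simp
qed

lemma mass_conservation: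
  assumes "t \<ge> 0"
  shows "(\<Sum>l=1..m. real l * w t l) = (\<Sum>l=1..m. real l * y l)"
proof -
  have "((\<lambda>s. \<Sum>l=1..m. real l * w s l) has_real_derivative (\<Sum>l=1..m. real l * rhs l s)) (at s within {0..})"
    if "s \<ge> 0" for s
    by (rule DERIV_sum, rule DERIV_cmult, rule has_real_derivative_w) (use that in auto)
  moreover have "(\<Sum>l=1..m. real l * rhs l s) = 0" for s
    using sum_mult_rhs[of real s] by simp
  ultimately obtain C where "\<And>s. s \<in> {0..} \<Longrightarrow> (\<Sum>l=1..m. real l * w s l) = C"
    using has_field_derivative_zero_constant[of "{0::real..}" "\<lambda>s. \<Sum>l=1..m. real l * w s l"] by force
  moreover have "(\<Sum>l=1..m. real l * w 0 l) = (\<Sum>l=1..m. real l * y l)"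
    by (rule sum.cong) (auto simp: w_init)
  ultimately show ?thesis using assms by force
qed

lemma initial_mass_le: "(\<Sum>l=1..m. real l * y l) \<le> rho y"
proof -
  have summ: "summable (\<lambda>l. real (Suc l) * y (Suc l))"
  proof -
    have "summable (\<lambda>l. real (Suc l) * \<bar>y (Suc l)\<bar>)" using y_X by (simp add: inX_def)
    moreover have "real (Suc l) * \<bar>y (Suc l)\<bar> = real (Suc l) * y (Suc l)" for l using y_nonneg by simp
    ultimately show ?thesis by simp
  qed
  have "(\<Sum>l=1..m. real l * y l) = (\<Sum>l<m. real (Suc l) * y (Suc l))"
    by (simp only: sum_bounds_lt_plus1[where f="\<lambda>l. real l * y l", symmetric])
  also have "\<dots> \<le> (\<Sum>l. real (Suc l) * y (Suc l))"
    by (rule sum_le_suminf[OF summ]) (use y_nonneg in auto)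
  finally show ?thesis by (simp add: rho_def)
qed

lemma rho_pos: "rho y > 0"
proof -
  have "real 1 * y 1 \<le> (\<Sum>l=1..m. real l * y l)"
    by (rule member_le_sum) (use m_ge_2 y_nonneg in auto)
  thus ?thesis using initial_mass_le y1 by simp
qed

lemma mass_le: "t \<ge> 0 \<Longrightarrow> (\<Sum>l=1..m. real l * w t l) \<le> rho y"
  using mass_conservation initial_mass_le by simp

lemma mult_w_le: assumes "t \<ge> 0" "k \<ge> 1" shows "real k * w t k \<le> rho y"
proof (cases "k \<le> m")
  case True
  have "real k * w t k \<le> (\<Sum>l=1..m. real l * w t l)"
    by (rule member_le_sum) (use True assms w_nonneg in auto)
  thus ?thesis using mass_le[OF assms(1)] by linarith
next
  case False thus ?thesis using w_eq_0 assms rho_pos by simp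
qed

lemma w_le: assumes "t \<ge> 0" "k \<ge> 1" shows "w t k \<le> rho y"
proof -
  have "w t k \<le> real k * w t k" using w_nonneg[OF assms] assms(2)
    by (simp add: mult_le_cancel_right1)
  thus ?thesis using mult_w_le[OF assms] by simp
qed

lemma Nw_nonneg: "t \<ge> 0 \<Longrightarrow> Nw t \<ge> 0"
  unfolding Nw_def using w_nonneg by (auto intro: sum_nonneg)

lemma Nw_le: assumes "t \<ge> 0" shows "Nw t \<le> rho y"
proof -
  have "Nw t \<le> (\<Sum>l=1..m. real l * w t l)" unfolding Nw_def
  proof (rule sum_mono)
    fix l assume l: "l \<in> {1..m}"
    hence "w t l \<ge> 0" using w_nonneg assms by auto
    thus "w t l \<le> real l * w t l" using l by (simp add: mult_le_cancel_right1)
  qed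
  thus ?thesis using mass_le[OF assms] by linarith
qed

lemma sum_shifted_mass_le: assumes "t \<ge> 0" shows "(\<Sum>k=1..m-1. real (Suc k) * w t (Suc k)) \<le> rho y"
proof -
  have "(\<Sum>k=1..m-1. real (Suc k) * w t (Suc k)) = (\<Sum>l=Suc 1..Suc (m-1). real l * w t l)"
    by (simp only: sum.shift_bounds_cl_Suc_ivl)
  also have "\<dots> \<le> (\<Sum>l=1..m. real l * w t l)"
    by (rule sum_mono2) (use m_ge_2 w_nonneg assms in auto)
  finally show ?thesis using mass_le[OF assms] by linarith
qed

lemma flux_total_le:
  assumes t: "t \<ge> 0" and k: "k \<ge> 1"
  shows "flux_total k t \<le> Cg * rho y * (real k * w t k) + Cg * rho y * Cc * (real (Suc k) * w t (Suc k))"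
proof -
  have g: "0 \<le> \<gamma> k" "\<gamma> k \<le> Cg * real k" using gamma_pos[OF k] gamma_le[OF k] by auto
  have cc: "0 \<le> ratio k" "ratio k \<le> Cc" using ratio_pos[OF k] ratio_le_Cc[OF k] by auto
  have w1: "0 \<le> w t 1" "w t 1 \<le> rho y" using w_nonneg w_le t by auto
  have wk: "0 \<le> w t k" using w_nonneg t k by auto
  have wk1: "0 \<le> w t (Suc k)" using w_nonneg t by auto
  have N: "0 \<le> Nw t" "Nw t \<le> rho y" using Nw_nonneg Nw_le t by auto
  have a: "\<gamma> k * (w t 1 * w t k) \<le> Cg * rho y * (real k * w t k)"
  proof -
    have "\<gamma> k * (w t 1 * w t k) \<le> (Cg * real k) * (rho y * w t k)"
      using g w1 wk by (intro mult_mono mult_right_mono) auto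
    thus ?thesis by (simp add: algebra_simps)
  qed
  have b: "\<gamma> k * (Nw t * ratio k * w t (Suc k)) \<le> Cg * rho y * Cc * (real (Suc k) * w t (Suc k))"
  proof -
    have "\<gamma> k * (Nw t * ratio k * w t (Suc k)) \<le> (Cg * real k) * (rho y * Cc * w t (Suc k))"
      using g N cc wk1 Cc_nonneg by (intro mult_mono mult_right_mono) auto
    also have "\<dots> \<le> (Cg * real (Suc k)) * (rho y * Cc * w t (Suc k))"
      using Cg_pos rho_pos Cc_nonneg wk1 by (intro mult_right_mono mult_left_mono) auto
    finally show ?thesis by (simp add: algebra_simps)
  qed
  show ?thesis using a b unfolding flux_total_def by (simp add: algebra_simps)
qed

lemma flux_total_le_flux_bound: assumes t: "t \<ge> 0" and k: "k \<ge> 1" shows "flux_total k t \<le> flux_bound"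
proof -
  have "Cg * rho y * (real k * w t k) \<le> Cg * rho y * rho y"
    using mult_w_le[OF t k] Cg_pos rho_pos by (intro mult_left_mono) auto
  moreover have "Cg * rho y * Cc * (real (Suc k) * w t (Suc k)) \<le> Cg * rho y * Cc * rho y"
    using mult_w_le[OF t, of "Suc k"] Cg_pos rho_pos Cc_nonneg by (intro mult_left_mono) auto
  ultimately show ?thesis using flux_total_le[OF t k] unfolding flux_bound_def by (simp add: algebra_simps)
qed

lemma abs_flux_le_total: assumes t: "t \<ge> 0" and k: "k \<ge> 1" shows "\<bar>flux k t\<bar> \<le> flux_total k t"
proof -
  have g: "0 \<le> \<gamma> k" using gamma_pos[OF k] by auto
  have "0 \<le> w t 1 * w t k" using w_nonneg t k by auto
  moreover have "0 \<le> Nw t * ratio k * w t (Suc k)" using Nw_nonneg[OF t] ratio_pos[OF k] w_nonneg[OF t, of "Suc k"] by auto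
  ultimately have "\<bar>w t 1 * w t k - Nw t * ratio k * w t (Suc k)\<bar> \<le> w t 1 * w t k + Nw t * ratio k * w t (Suc k)" by linarith
  hence "\<gamma> k * \<bar>w t 1 * w t k - Nw t * ratio k * w t (Suc k)\<bar> \<le> flux_total k t"
    unfolding flux_total_def using g by (intro mult_left_mono) auto
  thus ?thesis unfolding flux_def using g by (simp add: abs_mult)
qed

lemma flux_bound_pos: "flux_bound > 0" unfolding flux_bound_def using Cg_pos Cc_nonneg rho_pos by simp

lemma abs_trunc_flux_le: "t \<ge> 0 \<Longrightarrow> \<bar>trunc_flux k t\<bar> \<le> flux_bound"
  using abs_flux_le_total flux_total_le_flux_bound less_imp_le[OF flux_bound_pos] by (force simp: trunc_flux_def)

lemma sum_abs_trunc_flux_le: assumes t: "t \<ge> 0" shows "(\<Sum>k=1..m-1. \<bar>trunc_flux k t\<bar>) \<le> flux_bound"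
proof -
  have "(\<Sum>k=1..m-1. \<bar>trunc_flux k t\<bar>) \<le> (\<Sum>k=1..m-1. Cg * rho y * (real k * w t k) + Cg * rho y * Cc * (real (Suc k) * w t (Suc k)))"
  proof (rule sum_mono)
    fix k assume "k \<in> {1..m-1}"
    hence "trunc_flux k t = flux k t" "k \<ge> 1" using m_ge_2 by (auto simp: trunc_flux_def)
    thus "\<bar>trunc_flux k t\<bar> \<le> Cg * rho y * (real k * w t k) + Cg * rho y * Cc * (real (Suc k) * w t (Suc k))"
      using abs_flux_le_total[OF t] flux_total_le[OF t] by force
  qed
  also have "\<dots> = Cg * rho y * (\<Sum>k=1..m-1. real k * w t k) + Cg * rho y * Cc * (\<Sum>k=1..m-1. real (Suc k) * w t (Suc k))"
    by (simp add: sum.distrib sum_distrib_left)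
  also have "\<dots> \<le> Cg * rho y * rho y + Cg * rho y * Cc * rho y"
  proof (intro add_mono mult_left_mono)
    have "(\<Sum>k=1..m-1. real k * w t k) \<le> (\<Sum>k=1..m. real k * w t k)"
      by (rule sum_mono2) (use w_nonneg t in auto)
    thus "(\<Sum>k=1..m-1. real k * w t k) \<le> rho y" using mass_le[OF t] by simp
    show "(\<Sum>k=1..m-1. real (Suc k) * w t (Suc k)) \<le> rho y" using sum_shifted_mass_le[OF t] .
  qed (use Cg_pos Cc_nonneg rho_pos in auto)
  finally show ?thesis unfolding flux_bound_def by (simp add: algebra_simps)
qed

lemma abs_rhs_le: assumes t: "t \<ge> 0" and l: "l \<in> {1..m}" shows "\<bar>rhs l t\<bar> \<le> 2 * flux_bound"
proof (cases "l = 1")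
  case True
  have "\<bar>rhs l t\<bar> \<le> \<bar>trunc_flux 1 t\<bar> + \<bar>\<Sum>k=1..m-1. trunc_flux k t\<bar>" using True by (simp add: rhs_def)
  also have "\<bar>\<Sum>k=1..m-1. trunc_flux k t\<bar> \<le> (\<Sum>k=1..m-1. \<bar>trunc_flux k t\<bar>)" by (rule sum_abs)
  finally show ?thesis using abs_trunc_flux_le[OF t, of 1] sum_abs_trunc_flux_le[OF t] by simp
next
  case False
  hence "\<bar>rhs l t\<bar> \<le> \<bar>trunc_flux (l-1) t\<bar> + \<bar>trunc_flux l t\<bar>" by (simp add: rhs_def)
  thus ?thesis using abs_trunc_flux_le[OF t, of "l-1"] abs_trunc_flux_le[OF t, of l] by simp
qed

lemma w_lipschitz: assumes s: "s \<ge> 0" and t: "t \<ge> 0" and k: "k \<ge> 1"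
  shows "\<bar>w s k - w t k\<bar> \<le> 2 * flux_bound * \<bar>s - t\<bar>"
proof (cases "k \<le> m")
  case True
  have "norm (w s k - w t k) \<le> 2 * flux_bound * norm (s - t)"
  proof (rule field_differentiable_bound[where S="{0..}" and f="\<lambda>s. w s k" and f'="\<lambda>x. rhs k x"])
    show "convex {0::real..}" by simp
    show "((\<lambda>s. w s k) has_field_derivative rhs k z) (at z within {0..})" if "z \<in> {0..}" for z
      using has_real_derivative_w[of z k] that True k by auto
    show "norm (rhs k z) \<le> 2 * flux_bound" if "z \<in> {0..}" for z using abs_rhs_le[of z k] that True k by auto
  qed (use s t in auto)
  thus ?thesis by simp
next
  case False thus ?thesis using w_eq_0 s t less_imp_le[OF flux_bound_pos] by simp
qed

lemma Nw_lipschitz: assumes s: "s \<ge> 0" and t: "t \<ge> 0"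
  shows "\<bar>Nw s - Nw t\<bar> \<le> flux_bound * \<bar>s - t\<bar>"
proof -
  have "norm (Nw s - Nw t) \<le> flux_bound * norm (s - t)"
  proof (rule field_differentiable_bound[where S="{0..}" and f="Nw" and f'="\<lambda>x. - (\<Sum>k=1..m-1. trunc_flux k x)"])
    show "convex {0::real..}" by simp
    show "(Nw has_field_derivative - (\<Sum>k=1..m-1. trunc_flux k z)) (at z within {0..})" if "z \<in> {0..}" for z
      using has_real_derivative_Nw[of z] that by auto
    show "norm (- (\<Sum>k=1..m-1. trunc_flux k z)) \<le> flux_bound" if "z \<in> {0..}" for z
      using order_trans[OF sum_abs[of "\<lambda>k. trunc_flux k z" "{1..m-1}"] sum_abs_trunc_flux_le[of z]] that by auto
  qed (use s t in auto)
  thus ?thesis by simp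
qed

lemma gain_nonneg: assumes s: "s \<ge> 0" and l: "l \<in> {1..m}" shows "gain l s \<ge> 0"
proof -
  have nn: "w s k \<ge> 0" if "k \<ge> 1" for k using w_nonneg s that by auto
  have gc: "\<gamma> k * ratio k \<ge> 0" "\<gamma> k \<ge> 0" if "k \<ge> 1" for k using gamma_pos ratio_pos that by (auto intro: less_imp_le)
  have N: "Nw s \<ge> 0" using Nw_nonneg s by auto
  show ?thesis
  proof (cases "l = 1")
    case True
    have "0 \<le> \<gamma> 1 * ratio 1 * Nw s * w s 2" using gc[of 1] N nn[of 2] by simp
    moreover have "0 \<le> (\<Sum>k=1..m-1. \<gamma> k * ratio k * Nw s * w s (Suc k))"
      by (rule sum_nonneg) (use gc N nn in auto)
    ultimately show ?thesis using True by (simp add: gain_def)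
  next
    case False
    hence "l \<ge> 2" using l by auto
    have "0 \<le> \<gamma> (l-1) * w s 1 * w s (l-1)" using gc[of "l-1"] nn[of 1] nn[of "l-1"] \<open>l \<ge> 2\<close> by simp
    moreover have "0 \<le> \<gamma> l * ratio l * Nw s * w s (Suc l)" using gc[of l] N nn[of "Suc l"] \<open>l \<ge> 2\<close> by simp
    ultimately show ?thesis using False by (simp add: gain_def)
  qed
qed

lemma w_pos_of_gain_pos:
  assumes l: "l \<in> {1..m}" and "t > 0"
    and strict: "w 0 l > 0 \<or> (\<forall>s\<in>{0<..<t}. gain l s > 0)"
  shows "w t l > 0"
proof -
  obtain C where C: "\<And>k s. k \<in> {1..m} \<Longrightarrow> s \<in> {0..t} \<Longrightarrow> \<bar>loss k s\<bar> \<le> C"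
    using loss_bounded[of t] by blast
  have rhs_ge: "rhs l s \<ge> - C * w s l + gain l s" if "s \<in> {0..t}" for s
  proof -
    have "w s l * loss l s \<ge> w s l * (- C)"
      using C[OF l that] w_nonneg[of s l] l that by (intro mult_left_mono) auto
    thus ?thesis using rhs_eq_loss_gain[OF l, of s] by (simp add: algebra_simps)
  qed
  show ?thesis
  proof (rule pos_of_deriv_ge_linear[where g = "\<lambda>s. w s l" and f = "rhs l" and C = C])
    show "((\<lambda>s. w s l) has_real_derivative rhs l s) (at s within {0..t})" if "s \<in> {0..t}" for s
      using DERIV_subset[OF has_real_derivative_w[of s l]] that l by auto
    show "rhs l s \<ge> - C * w s l" if "s \<in> {0..t}" for s
      using rhs_ge[OF that] gain_nonneg[of s l] that l by auto
    show "w 0 l > 0 \<or> (\<forall>s\<in>{0<..<t}. rhs l s > - C * w s l)"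
    proof (cases "w 0 l > 0")
      case False
      have "rhs l s > - C * w s l" if "s \<in> {0<..<t}" for s
        using strict False rhs_ge[of s] that by fastforce
      thus ?thesis by blast
    qed simp
  qed (use \<open>t > 0\<close> w_nonneg l in auto)
qed

lemma w1_pos: "t \<ge> 0 \<Longrightarrow> w t 1 > 0"
proof -
  assume t: "t \<ge> 0"
  have "w 0 1 > 0" using w_init[of 1] y1 m_ge_2 by simp
  thus ?thesis using w_pos_of_gain_pos[of 1 t] t m_ge_2 by (cases "t = 0") auto
qed

lemma w_pos: "l \<in> {1..m} \<Longrightarrow> t > 0 \<Longrightarrow> w t l > 0"
proof (induction l arbitrary: t)
  case 0 thus ?case by simp
next
  case (Suc n)
  show ?case
  proof (cases "n = 0")
    case True thus ?thesis using w1_pos Suc by simp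
  next
    case False
    have "gain (Suc n) s > 0" if "s \<in> {0<..<t}" for s
    proof -
      have s: "s > 0" using that by simp
      have "w s n > 0" using Suc.IH[OF _ s] False Suc.prems by simp
      moreover have "w s 1 > 0" using w1_pos s by simp
      moreover have "\<gamma> n > 0" using gamma_pos False by simp
      ultimately have "\<gamma> (Suc n - 1) * w s 1 * w s (Suc n - 1) > 0" by simp
      moreover have "0 \<le> (if Suc n < m then \<gamma> (Suc n) * ratio (Suc n) * Nw s * w s (Suc (Suc n)) else 0)"
        using gamma_pos[of "Suc n"] ratio_pos[of "Suc n"] Nw_nonneg[of s] w_nonneg[of s "Suc (Suc n)"] s by simp
      ultimately show ?thesis using False by (simp add: gain_def)
    qed
    thus ?thesis using w_pos_of_gain_pos[OF Suc.prems] by blast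
  qed
qed

lemma Nw_pos: "t \<ge> 0 \<Longrightarrow> Nw t > 0"
proof -
  assume t: "t \<ge> 0"
  have "w t 1 \<le> Nw t" unfolding Nw_def by (rule member_le_sum) (use w_nonneg t m_ge_2 in auto)
  thus ?thesis using w1_pos[OF t] by simp
qed

definition "free_energy t = (\<Sum>l=1..m. w t l * ln (w t l) - w t l * ln (q l)) - Nw t * ln (Nw t)"
definition "free_energy_bound = rho y * rho y + Lq * rho y + rho y + 1"

lemma has_real_derivative_w_at: "t > 0 \<Longrightarrow> l \<in> {1..m} \<Longrightarrow> ((\<lambda>s. w s l) has_real_derivative rhs l t) (at t)"
  using has_real_derivative_w[of t l] at_within_interior[of t "{0..}"] by simp

lemma has_real_derivative_free_energy:
  assumes t: "t > 0"
  shows "(free_energy has_real_derivative (\<Sum>l=1..m. rhs l t * (ln (w t l) - ln (q l) - ln (Nw t)))) (at t)"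
proof -
  have dN: "(Nw has_real_derivative (\<Sum>l=1..m. rhs l t)) (at t)"
    unfolding Nw_def[abs_def] by (rule DERIV_sum) (use has_real_derivative_w_at t in auto)
  have d1: "((\<lambda>s. \<Sum>l=1..m. w s l * ln (w s l) - w s l * ln (q l)) has_real_derivative
        (\<Sum>l=1..m. rhs l t * (ln (w t l) + 1) - rhs l t * ln (q l))) (at t)"
  proof (rule DERIV_sum)
    fix l assume l: "l \<in> {1..m}"
    note w' = has_real_derivative_w_at[OF t l]
    show "((\<lambda>s. w s l * ln (w s l) - w s l * ln (q l)) has_real_derivative
        rhs l t * (ln (w t l) + 1) - rhs l t * ln (q l)) (at t)"
      by (rule DERIV_diff[OF has_real_derivative_x_ln_x[OF w' w_pos[OF l t]] DERIV_cmult_right[OF w']])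
  qed
  have d2: "((\<lambda>s. Nw s * ln (Nw s)) has_real_derivative (\<Sum>l=1..m. rhs l t) * (ln (Nw t) + 1)) (at t)"
    by (rule has_real_derivative_x_ln_x[OF dN Nw_pos]) (use t in simp)
  have "(free_energy has_real_derivative
      (\<Sum>l=1..m. rhs l t * (ln (w t l) + 1) - rhs l t * ln (q l)) - (\<Sum>l=1..m. rhs l t) * (ln (Nw t) + 1)) (at t)"
    unfolding free_energy_def[abs_def] by (rule DERIV_diff[OF d1 d2])
  moreover have "(\<Sum>l=1..m. rhs l t * (ln (w t l) + 1) - rhs l t * ln (q l)) - (\<Sum>l=1..m. rhs l t) * (ln (Nw t) + 1)
      = (\<Sum>l=1..m. rhs l t * (ln (w t l) - ln (q l) - ln (Nw t)))"
    by (simp add: algebra_simps sum_subtractf sum.distrib sum_distrib_right sum_distrib_left)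
  ultimately show ?thesis by simp
qed

lemma flux_dissipation:
  assumes t: "t > 0" and k: "k \<in> {1..m-1}"
  defines "u \<equiv> \<lambda>l. ln (w t l) - ln (q l) - ln (Nw t)"
  shows "trunc_flux k t * (u (Suc k) - u k - u 1) \<le> - ((flux k t)^2 / flux_bound)"
proof -
  have "k \<ge> 1" "k < m" using k m_ge_2 by auto
  define a where "a = w t 1 * w t k"
  define b where "b = Nw t * ratio k * w t (Suc k)"
  have pos: "w t 1 > 0" "w t k > 0" "w t (Suc k) > 0" "Nw t > 0" "ratio k > 0" "q k > 0" "q (Suc k) > 0"
    using w1_pos w_pos[of k t] w_pos[of "Suc k" t] Nw_pos ratio_pos q_pos \<open>k \<ge> 1\<close> \<open>k < m\<close> t by auto
  hence "a > 0" "b > 0" by (simp_all add: a_def b_def)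
  have u: "u (Suc k) - u k - u 1 = - (ln a - ln b)"
    using pos q1 by (simp add: u_def a_def b_def ratio_def ln_mult ln_div)
  have flux: "trunc_flux k t = \<gamma> k * (a - b)" "flux k t = \<gamma> k * (a - b)"
    using \<open>k \<ge> 1\<close> \<open>k < m\<close> by (simp_all add: trunc_flux_def flux_def a_def b_def)
  have "\<gamma> k * (a + b) \<le> flux_bound"
    using flux_total_le_flux_bound t \<open>k \<ge> 1\<close> by (simp add: flux_total_def a_def b_def)
  hence "(\<gamma> k * (a - b))^2 / flux_bound \<le> \<gamma> k * (a - b) * (ln a - ln b)"
    by (rule sq_div_le_mult_diff_ln_diff[OF \<open>a > 0\<close> \<open>b > 0\<close> gamma_pos[OF \<open>k \<ge> 1\<close>]])
  thus ?thesis unfolding u flux mult_minus_right by linarith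
qed

lemma free_energy_deriv_le:
  assumes t: "t > 0" and i: "i \<in> {1..m-1}"
  shows "(\<Sum>l=1..m. rhs l t * (ln (w t l) - ln (q l) - ln (Nw t))) \<le> - ((flux i t)^2 / flux_bound)"
proof -
  define u where "u = (\<lambda>l. ln (w t l) - ln (q l) - ln (Nw t))"
  have "(\<Sum>l=1..m. rhs l t * (ln (w t l) - ln (q l) - ln (Nw t))) = (\<Sum>l=1..m. u l * rhs l t)"
    by (simp add: u_def mult.commute)
  also have "\<dots> = (\<Sum>k=1..m-1. trunc_flux k t * (u (Suc k) - u k - u 1))" by (rule sum_mult_rhs)
  also have "\<dots> \<le> (\<Sum>k=1..m-1. - ((flux k t)^2 / flux_bound))"
    by (rule sum_mono) (use flux_dissipation[OF t] in \<open>simp add: u_def\<close>)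
  also have "\<dots> \<le> - ((flux i t)^2 / flux_bound)"
  proof -
    have "(flux i t)^2 / flux_bound \<le> (\<Sum>k=1..m-1. (flux k t)^2 / flux_bound)"
      by (rule member_le_sum) (use i flux_bound_pos in auto)
    thus ?thesis by (simp add: sum_negf)
  qed
  finally show ?thesis .
qed

lemma free_energy_dissipation:
  assumes a: "0 < a" and ab: "a \<le> b" and i: "i \<in> {1..m-1}"
    and flux: "\<forall>s\<in>{a..b}. \<delta> \<le> (flux i s)^2"
  shows "free_energy b + \<delta> * (b - a) / flux_bound \<le> free_energy a"
proof -
  define H where "H s = free_energy s + \<delta> * s / flux_bound" for s
  have "H a \<ge> H b"
  proof (rule DERIV_nonpos_imp_nonincreasing[OF ab])
    fix x assume x: "a \<le> x" "x \<le> b"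
    hence x0: "x > 0" using a by simp
    have "(H has_real_derivative (\<Sum>l=1..m. rhs l x * (ln (w x l) - ln (q l) - ln (Nw x))) + \<delta> / flux_bound) (at x)"
      unfolding H_def[abs_def]
      by (rule DERIV_add[OF has_real_derivative_free_energy[OF x0] DERIV_cdivide[OF DERIV_cmult_Id]])
    moreover have "(\<Sum>l=1..m. rhs l x * (ln (w x l) - ln (q l) - ln (Nw x))) + \<delta> / flux_bound \<le> 0"
    proof -
      have "\<delta> / flux_bound \<le> (flux i x)^2 / flux_bound" using flux x flux_bound_pos by (simp add: divide_right_mono)
      thus ?thesis using free_energy_deriv_le[OF x0 i] by linarith
    qed
    ultimately show "\<exists>y. (H has_real_derivative y) (at x) \<and> y \<le> 0" by blast
  qed
  thus ?thesis unfolding H_def by (simp add: diff_divide_distrib algebra_simps)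
qed

lemma sum_w_ln_w_ge:
  assumes "t \<ge> 0"
  shows "(\<Sum>l=1..m. w t l * ln (w t l)) \<ge> - rho y - 1"
proof -
  have "(\<Sum>l=1..m. w t l * ln (w t l)) \<ge> (\<Sum>l=1..m. - (real l * w t l) - exp (- real l))"
    by (rule sum_mono) (use x_ln_x_ge_affine w_nonneg assms in auto)
  also have "(\<Sum>l=1..m. - (real l * w t l) - exp (- real l))
      = - (\<Sum>l=1..m. real l * w t l) - (\<Sum>l=1..m. exp (- real l))"
    by (simp add: sum_subtractf sum_negf)
  finally show ?thesis using mass_le[OF assms] sum_exp_minus_le_one[of m] by linarith
qed

lemma sum_w_ln_w_le:
  assumes "t \<ge> 0"
  shows "(\<Sum>l=1..m. w t l * ln (w t l)) \<le> rho y * rho y"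
proof -
  have "(\<Sum>l=1..m. w t l * ln (w t l)) \<le> (\<Sum>l=1..m. w t l * rho y)"
    by (rule sum_mono) (use x_ln_x_le w_nonneg w_le assms in auto)
  also have "\<dots> = Nw t * rho y" by (simp add: Nw_def sum_distrib_right)
  also have "\<dots> \<le> rho y * rho y" using Nw_le[OF assms] rho_pos by (intro mult_right_mono) auto
  finally show ?thesis .
qed

lemma abs_sum_w_ln_q_le:
  assumes "t \<ge> 0"
  shows "\<bar>\<Sum>l=1..m. w t l * ln (q l)\<bar> \<le> Lq * rho y"
proof -
  have "\<bar>\<Sum>l=1..m. w t l * ln (q l)\<bar> \<le> (\<Sum>l=1..m. w t l * \<bar>ln (q l)\<bar>)"
    using sum_abs[of "\<lambda>l. w t l * ln (q l)" "{1..m}"] w_nonneg[OF assms] by (simp add: abs_mult)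
  also have "\<dots> \<le> (\<Sum>l=1..m. Lq * (real l * w t l))"
  proof (rule sum_mono)
    fix l assume "l \<in> {1..m}"
    hence "w t l * \<bar>ln (q l)\<bar> \<le> w t l * (Lq * real l)"
      using ln_q_le w_nonneg[OF assms] by (intro mult_left_mono) auto
    thus "w t l * \<bar>ln (q l)\<bar> \<le> Lq * (real l * w t l)" by (simp add: algebra_simps)
  qed
  also have "\<dots> = Lq * (\<Sum>l=1..m. real l * w t l)" by (simp add: sum_distrib_left)
  also have "\<dots> \<le> Lq * rho y" using mass_le[OF assms] Lq_nonneg by (rule mult_left_mono)
  finally show ?thesis .
qed

lemma abs_free_energy_le:
  assumes "t \<ge> 0"
  shows "\<bar>free_energy t\<bar> \<le> free_energy_bound"
proof -
  have "free_energy t = (\<Sum>l=1..m. w t l * ln (w t l)) - (\<Sum>l=1..m. w t l * ln (q l)) - Nw t * ln (Nw t)"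
    by (simp add: free_energy_def sum_subtractf)
  moreover have "Nw t * ln (Nw t) \<ge> -1" using x_ln_x_ge_minus_one Nw_nonneg[OF assms] by simp
  moreover have "Nw t * ln (Nw t) \<le> rho y * rho y"
  proof -
    have "Nw t * ln (Nw t) \<le> Nw t * rho y" using x_ln_x_le Nw_nonneg[OF assms] Nw_le[OF assms] .
    also have "\<dots> \<le> rho y * rho y" using Nw_le[OF assms] rho_pos by (intro mult_right_mono) auto
    finally show ?thesis .
  qed
  ultimately show ?thesis
    using sum_w_ln_w_ge[OF assms] sum_w_ln_w_le[OF assms] abs_sum_w_ln_q_le[OF assms] rho_pos Lq_nonneg
    by (simp add: free_energy_bound_def abs_le_iff)
qed

lemma flux_lipschitz:
  assumes l: "l \<ge> 1" and s: "s \<ge> 0" and t: "t \<ge> 0"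
  shows "\<bar>flux l s - flux l t\<bar> \<le> \<gamma> l * (4 + 3 * Cc) * rho y * flux_bound * \<bar>s - t\<bar>"
proof -
  define d where "d = \<bar>s - t\<bar>"
  have bw: "\<bar>w x k\<bar> \<le> rho y" if "x \<ge> 0" "k \<ge> 1" for x k using w_nonneg w_le that by auto
  have bN: "\<bar>Nw x\<bar> \<le> rho y" if "x \<ge> 0" for x using Nw_nonneg Nw_le that by auto
  have g: "0 \<le> \<gamma> l" using gamma_pos l by (simp add: less_imp_le)
  have cc: "0 \<le> ratio l" "ratio l \<le> Cc" using ratio_pos ratio_le_Cc l by (auto simp: less_imp_le)
  have A: "\<bar>w s 1 * w s l - w t 1 * w t l\<bar> \<le> 4 * rho y * flux_bound * d"
  proof -
    have "\<bar>w s 1 * w s l - w t 1 * w t l\<bar> \<le> \<bar>w s 1\<bar> * \<bar>w s l - w t l\<bar> + \<bar>w t l\<bar> * \<bar>w s 1 - w t 1\<bar>"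
      by (rule abs_mult_diff_le)
    also have "\<dots> \<le> rho y * (2 * flux_bound * d) + rho y * (2 * flux_bound * d)"
      by (intro add_mono mult_mono) (use bw s t l w_lipschitz[OF s t] d_def rho_pos in auto)
    finally show ?thesis by (simp add: algebra_simps)
  qed
  have B: "\<bar>Nw s * w s (Suc l) - Nw t * w t (Suc l)\<bar> \<le> 3 * rho y * flux_bound * d"
  proof -
    have "\<bar>Nw s * w s (Suc l) - Nw t * w t (Suc l)\<bar>
        \<le> \<bar>Nw s\<bar> * \<bar>w s (Suc l) - w t (Suc l)\<bar> + \<bar>w t (Suc l)\<bar> * \<bar>Nw s - Nw t\<bar>"
      by (rule abs_mult_diff_le)
    also have "\<dots> \<le> rho y * (2 * flux_bound * d) + rho y * (flux_bound * d)"
      by (intro add_mono mult_mono)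
        (use bw bN s t w_lipschitz[OF s t] Nw_lipschitz[OF s t] d_def rho_pos in auto)
    finally show ?thesis by (simp add: algebra_simps)
  qed
  have "flux l s - flux l t
      = \<gamma> l * ((w s 1 * w s l - w t 1 * w t l) - ratio l * (Nw s * w s (Suc l) - Nw t * w t (Suc l)))"
    by (simp add: flux_def algebra_simps)
  hence "\<bar>flux l s - flux l t\<bar>
      = \<gamma> l * \<bar>(w s 1 * w s l - w t 1 * w t l) - ratio l * (Nw s * w s (Suc l) - Nw t * w t (Suc l))\<bar>"
    using g by (simp add: abs_mult)
  also have "\<dots> \<le> \<gamma> l * (4 * rho y * flux_bound * d + Cc * (3 * rho y * flux_bound * d))"
  proof (rule mult_left_mono[OF _ g])
    have "\<bar>ratio l * (Nw s * w s (Suc l) - Nw t * w t (Suc l))\<bar> \<le> Cc * (3 * rho y * flux_bound * d)"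
      unfolding abs_mult using cc B by (intro mult_mono) auto
    thus "\<bar>(w s 1 * w s l - w t 1 * w t l) - ratio l * (Nw s * w s (Suc l) - Nw t * w t (Suc l))\<bar>
        \<le> 4 * rho y * flux_bound * d + Cc * (3 * rho y * flux_bound * d)" using A by linarith
  qed
  finally show ?thesis by (simp add: d_def algebra_simps)
qed

lemma first_moment_w_le:
  assumes "t \<ge> 0"
  shows "(\<Sum>k<n. real (Suc k) * w t (Suc k)) \<le> rho y"
proof -
  have "(\<Sum>k<n. real (Suc k) * w t (Suc k)) = (\<Sum>l=1..n. real l * w t l)"
    by (simp only: sum_bounds_lt_plus1[where f="\<lambda>l. real l * w t l"])
  also have "\<dots> \<le> (\<Sum>l=1..max n m. real l * w t l)"
    by (rule sum_mono2) (use w_nonneg assms in auto)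
  also have "\<dots> = (\<Sum>l=1..m. real l * w t l)"
    by (rule sum.mono_neutral_right) (use w_eq_0 assms in auto)
  also have "\<dots> \<le> rho y" using mass_le[OF assms] .
  finally show ?thesis .
qed

end

section \<open>Passage to the limit\<close>

lemma Jflux_0_eq: "Jflux q \<gamma> x 0 = - (\<Sum>k. Jflux q \<gamma> x (Suc k))"
  by (simp add: Jflux_def)

locale truncation_limit =
  fixes q \<gamma> y :: "nat \<Rightarrow> real" and M :: "nat \<Rightarrow> nat" and W :: "nat \<Rightarrow> real \<Rightarrow> nat \<Rightarrow> real"
    and z :: "real \<Rightarrow> nat \<Rightarrow> real" and Cg Cc Lq :: real
  assumes truncation: "\<And>j. truncation q \<gamma> y (M j) (W j) Cg Cc Lq"
    and M_tendsto: "filterlim M at_top sequentially"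
    and W_tendsto: "\<And>t l. t \<ge> 0 \<Longrightarrow> l \<ge> 1 \<Longrightarrow> (\<lambda>j. W j t l) \<longlonglongrightarrow> z t l"
begin

lemma z_nonneg: "t \<ge> 0 \<Longrightarrow> l \<ge> 1 \<Longrightarrow> z t l \<ge> 0"
  by (rule LIMSEQ_le_const[OF W_tendsto]) (auto intro!: exI[of _ 0] truncation.w_nonneg[OF truncation])

lemma first_moment_z_le: "t \<ge> 0 \<Longrightarrow> (\<Sum>k<n. real (Suc k) * z t (Suc k)) \<le> rho y"
  by (rule first_moment_bound_of_tendsto[where a = "\<lambda>j k. W j t (Suc k)"])
    (use W_tendsto truncation.first_moment_w_le[OF truncation] in auto)

lemma Ntot_tendsto: "t \<ge> 0 \<Longrightarrow> (\<lambda>j. Ntot (W j t)) \<longlonglongrightarrow> Ntot (z t)"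
  unfolding Ntot_def
  by (rule suminf_tendsto_of_first_moment_bound[where \<rho> = "rho y"])
    (use W_tendsto truncation.w_nonneg[OF truncation] truncation.first_moment_w_le[OF truncation] in auto)

lemma Jflux_tendsto:
  assumes "t \<ge> 0" "l \<ge> 1"
  shows "(\<lambda>j. Jflux q \<gamma> (W j t) l) \<longlonglongrightarrow> Jflux q \<gamma> (z t) l"
  using assms truncation.q_pos[OF truncation, of "Suc l"] unfolding Jflux_def
  by (auto intro!: tendsto_intros W_tendsto Ntot_tendsto)

lemma Jflux_tendsto_zero:
  assumes "l \<ge> 1"
  shows "((\<lambda>t. Jflux q \<gamma> (z t) l) \<longlongrightarrow> 0) at_top"
proof -
  have "eventually (\<lambda>j. Suc l \<le> M j) sequentially"
    using M_tendsto by (simp add: filterlim_at_top)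
  then obtain j0 where j0: "\<And>j. j \<ge> j0 \<Longrightarrow> M j > l" by (auto simp: eventually_sequentially Suc_le_eq)
  have flux_eq: "Jflux q \<gamma> (W j s) l = truncation.flux q \<gamma> (M j) (W j) l s" if "s \<ge> 0" for j s
    using truncation.Jflux_eq[OF truncation that assms] .
  show ?thesis
  proof (rule tendsto_zero_of_uniform_dissipation[where E = "\<lambda>j. truncation.free_energy q (M j) (W j)"])
    show "(\<lambda>j. Jflux q \<gamma> (W j t) l) \<longlonglongrightarrow> Jflux q \<gamma> (z t) l" if "t \<ge> 0" for t
      using Jflux_tendsto[OF that assms] .
    show "\<bar>Jflux q \<gamma> (W j s) l - Jflux q \<gamma> (W j t) l\<bar>
        \<le> \<gamma> l * (4 + 3 * Cc) * rho y * truncation.flux_bound y Cg Cc * \<bar>s - t\<bar>" if "s \<ge> 0" "t \<ge> 0" for j s t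
      using truncation.flux_lipschitz[OF truncation assms that] by (simp add: flux_eq that)
    show "\<bar>truncation.free_energy q (M j) (W j) t\<bar> \<le> truncation.free_energy_bound y Lq" if "t \<ge> 0" for j t
      using truncation.abs_free_energy_le[OF truncation that] .
    show "0 < inverse (truncation.flux_bound y Cg Cc)"
      using truncation.flux_bound_pos[OF truncation] by simp
    show "truncation.free_energy q (M j) (W j) b + inverse (truncation.flux_bound y Cg Cc) * \<delta> * (b - a)
        \<le> truncation.free_energy q (M j) (W j) a"
      if "j \<ge> j0" "0 < a" "a \<le> b" "\<forall>s\<in>{a..b}. \<delta> \<le> (Jflux q \<gamma> (W j s) l)^2" for j a b \<delta>
    proof -
      have "l \<in> {1..M j - 1}" using j0[OF that(1)] assms by auto
      moreover have "\<forall>s\<in>{a..b}. \<delta> \<le> (truncation.flux q \<gamma> (M j) (W j) l s)^2"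
      proof
        fix s assume "s \<in> {a..b}"
        hence "\<delta> \<le> (Jflux q \<gamma> (W j s) l)^2" "s \<ge> 0" using that(2,4) by auto
        thus "\<delta> \<le> (truncation.flux q \<gamma> (M j) (W j) l s)^2" using flux_eq by simp
      qed
      ultimately show ?thesis
        using truncation.free_energy_dissipation[OF truncation that(2,3)] by (simp add: divide_inverse algebra_simps)
    qed
  qed
qed

lemma Ntot_z_le:
  assumes "t \<ge> 0"
  shows "0 \<le> Ntot (z t)" "Ntot (z t) \<le> rho y"
proof -
  have nonneg: "z t (Suc k) \<ge> 0" for k using z_nonneg assms by simp
  have "(\<Sum>k<n. real (Suc k) * z t (Suc k)) \<le> rho y" for n using first_moment_z_le assms .
  note moment = nonneg this
  show "0 \<le> Ntot (z t)"
    unfolding Ntot_def by (rule suminf_nonneg[OF summable_of_first_moment_bound[OF moment] nonneg])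
  show "Ntot (z t) \<le> rho y"
    using suminf_le_of_first_moment_bound[OF moment, of 0] by (simp add: Ntot_def)
qed

lemma abs_Jflux_z_le:
  assumes "t \<ge> 0" "l \<ge> 1"
  shows "\<bar>Jflux q \<gamma> (z t) l\<bar> \<le> \<gamma> l * rho y * (z t l + Cc * z t (Suc l))"
proof -
  interpret w0: truncation q \<gamma> y "M 0" "W 0" Cg Cc Lq by (rule truncation)
  have z: "0 \<le> z t 1" "z t 1 \<le> rho y" "0 \<le> z t l" "0 \<le> z t (Suc l)"
    using z_nonneg[OF assms(1)] first_moment_z_le[OF assms(1), of 1] assms(2) by auto
  have c: "0 \<le> q l / q (Suc l)" "q l / q (Suc l) \<le> Cc"
    using w0.q_pos[of l] w0.q_pos[of "Suc l"] w0.ratio_le[of l] assms(2) by auto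
  have "0 \<le> z t 1 * z t l" "0 \<le> Ntot (z t) * (q l / q (Suc l)) * z t (Suc l)"
    using z c Ntot_z_le[OF assms(1)] by (simp_all only: mult_nonneg_nonneg)
  hence "\<bar>z t 1 * z t l - Ntot (z t) * (q l / q (Suc l)) * z t (Suc l)\<bar>
      \<le> z t 1 * z t l + Ntot (z t) * (q l / q (Suc l)) * z t (Suc l)"
    unfolding abs_le_iff by linarith
  also have "\<dots> \<le> rho y * z t l + rho y * Cc * z t (Suc l)"
    using z c Ntot_z_le[OF assms(1)] by (intro add_mono mult_mono mult_right_mono) auto
  finally have bound: "\<bar>z t 1 * z t l - Ntot (z t) * (q l / q (Suc l)) * z t (Suc l)\<bar>
      \<le> rho y * z t l + rho y * Cc * z t (Suc l)" .
  have "\<bar>Jflux q \<gamma> (z t) l\<bar> = \<gamma> l * \<bar>z t 1 * z t l - Ntot (z t) * (q l / q (Suc l)) * z t (Suc l)\<bar>"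
    using w0.gamma_pos[OF assms(2)] assms(2) by (simp add: Jflux_def abs_mult)
  also have "\<dots> \<le> \<gamma> l * (rho y * z t l + rho y * Cc * z t (Suc l))"
    using bound w0.gamma_pos[OF assms(2)] by (intro mult_left_mono) auto
  finally show ?thesis by (simp add: algebra_simps)
qed

lemma Jflux_0_tendsto_zero:
  assumes "(\<lambda>l. \<gamma> l / real l) \<longlonglongrightarrow> 0"
  shows "((\<lambda>t. Jflux q \<gamma> (z t) 0) \<longlongrightarrow> 0) at_top"
proof -
  interpret w0: truncation q \<gamma> y "M 0" "W 0" Cg Cc Lq by (rule truncation)
  define a where "a t k = real (Suc k) * z t (Suc k)" for t k
  have a_nonneg: "a t k \<ge> 0" if "t \<ge> 0" for t k using z_nonneg that by (simp add: a_def)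
  have a_sum: "(\<Sum>k<n. a t k) \<le> rho y" if "t \<ge> 0" for t n using first_moment_z_le[OF that] by (simp add: a_def)
  have "((\<lambda>t. \<Sum>k. Jflux q \<gamma> (z t) (Suc k)) \<longlongrightarrow> 0) at_top"
  proof (rule suminf_tendsto_zero_of_dominated[where e = "\<lambda>k. \<gamma> (Suc k) / real (Suc k)"
        and A = "\<lambda>t k. rho y * (a t k + Cc * a t (Suc k))" and M = "rho y * (rho y + Cc * rho y)"])
    show "((\<lambda>t. Jflux q \<gamma> (z t) (Suc k)) \<longlongrightarrow> 0) at_top" for k by (rule Jflux_tendsto_zero) simp
    show "(\<lambda>k. \<gamma> (Suc k) / real (Suc k)) \<longlonglongrightarrow> 0" using LIMSEQ_Suc[OF assms] .
    show "0 \<le> rho y * (a t k + Cc * a t (Suc k))" if "t \<ge> 0" for t k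
      using a_nonneg[OF that] w0.rho_pos w0.Cc_nonneg by simp
    show "(\<Sum>k<n. rho y * (a t k + Cc * a t (Suc k))) \<le> rho y * (rho y + Cc * rho y)" if "t \<ge> 0" for t n
    proof -
      have "(\<Sum>k<n. a t (Suc k)) \<le> (\<Sum>k<Suc n. a t k)"
        using sum.lessThan_Suc_shift[of "a t" n] a_nonneg[OF that, of 0] by simp
      hence "Cc * (\<Sum>k<n. a t (Suc k)) \<le> Cc * rho y"
        using a_sum[OF that, of "Suc n"] w0.Cc_nonneg by (intro mult_left_mono) auto
      hence "(\<Sum>k<n. a t k + Cc * a t (Suc k)) \<le> rho y + Cc * rho y"
        using a_sum[OF that, of n] by (simp add: sum.distrib sum_distrib_left)
      thus ?thesis using w0.rho_pos by (simp add: sum_distrib_left[symmetric])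
    qed
    show "\<bar>Jflux q \<gamma> (z t) (Suc k)\<bar> \<le> \<gamma> (Suc k) / real (Suc k) * (rho y * (a t k + Cc * a t (Suc k)))"
      if "t \<ge> 0" for t k
    proof -
      have "real (Suc k) * z t (Suc (Suc k)) \<le> a t (Suc k)"
        using z_nonneg[OF that, of "Suc (Suc k)"] by (simp add: a_def mult_right_mono)
      hence "rho y * (z t (Suc k) + Cc * z t (Suc (Suc k)))
          \<le> rho y * (a t k + Cc * a t (Suc k)) / real (Suc k)"
        using w0.rho_pos w0.Cc_nonneg by (simp add: a_def field_simps mult_left_mono)
      hence "\<gamma> (Suc k) * (rho y * (z t (Suc k) + Cc * z t (Suc (Suc k))))
          \<le> \<gamma> (Suc k) * (rho y * (a t k + Cc * a t (Suc k)) / real (Suc k))"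
        using w0.gamma_pos[of "Suc k"] by (intro mult_left_mono) auto
      with abs_Jflux_z_le[OF that, of "Suc k"] show ?thesis by (simp add: mult.assoc)
    qed
  qed
  thus ?thesis using tendsto_minus by (fastforce simp: Jflux_0_eq)
qed

end

theorem lemma15:
  fixes q \<gamma> y :: "nat \<Rightarrow> real" and R :: real and z :: "real \<Rightarrow> nat \<Rightarrow> real"
  assumes q_pos: "\<forall>l\<ge>1. q l > 0"
    and q1: "q 1 = 1"
    and R_lim: "(\<lambda>l. q l / q (Suc l)) \<longlonglongrightarrow> R"
    and R_pos: "0 < R"
    and gamma_pos: "\<forall>l\<ge>1. \<gamma> l > 0"
    and gamma_lim: "(\<lambda>l. \<gamma> l / real l) \<longlonglongrightarrow> 0"
    and y_X: "inX y"
    and y_nonneg: "\<forall>l\<ge>1. y l \<ge> 0"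
    and y1: "y 1 > 0"
    and rho0: "rho y > 0"
    and z_sol: "trunc_limit_solution q \<gamma> y z"
    and z_nonneg: "\<forall>t\<ge>0. \<forall>l\<ge>1. z t l \<ge> 0"
  shows "\<forall>l. ((\<lambda>t. Jflux q \<gamma> (z t) l) \<longlongrightarrow> 0) at_top"
proof -
  obtain Cg where gamma_le: "\<And>l. l \<ge> 1 \<Longrightarrow> \<gamma> l \<le> Cg * real l"
    using linear_bound_of_convergent_div[OF convergentI[OF gamma_lim]] by metis
  obtain lo Cc where "lo > 0" and ratio: "\<And>l. l \<ge> 1 \<Longrightarrow> lo \<le> q l / q (Suc l) \<and> q l / q (Suc l) \<le> Cc"
    using pos_bounds_of_tendsto_pos[OF R_lim R_pos] q_pos by (metis divide_pos_pos le_SucI)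
  obtain Lq where ln_q_le: "\<And>l. l \<ge> 1 \<Longrightarrow> \<bar>ln (q l)\<bar> \<le> Lq * real l"
    using ln_linear_bound_of_ratio_bounds[OF q1 _ \<open>lo > 0\<close> ratio] q_pos by metis
  obtain zs r where sol: "\<forall>m\<ge>2. trunc_solution q \<gamma> y m (zs m)" and r: "strict_mono r" "\<forall>j. 2 \<le> r j"
    and lim: "\<forall>l\<ge>1. \<forall>T\<ge>0. uniform_limit {0..T} (\<lambda>j t. zs (r j) t l) (\<lambda>t. z t l) sequentially"
    using z_sol unfolding trunc_limit_solution_def by blast
  interpret truncation_limit q \<gamma> y r "\<lambda>j. zs (r j)" z Cg Cc Lq
  proof (rule truncation_limit.intro)
    show "truncation q \<gamma> y (r j) (zs (r j)) Cg Cc Lq" for j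
      by unfold_locales (use r sol q_pos q1 gamma_pos y_nonneg y1 y_X gamma_le ratio ln_q_le in auto)
    show "filterlim r at_top sequentially" using r(1) by (rule filterlim_subseq)
    show "(\<lambda>j. zs (r j) t l) \<longlonglongrightarrow> z t l" if "t \<ge> 0" "l \<ge> 1" for t l
      using tendsto_uniform_limitI[OF lim[rule_format, OF that(2) that(1)], of t] that by simp
  qed
  show ?thesis
    using Jflux_tendsto_zero Jflux_0_tendsto_zero[OF gamma_lim] by (metis less_one not_less)
qed

end
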